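(* Let $n\ge1$ and $\gamma\in PSL(n+1,\mathbb{C})$. Then $\gamma$ is loxodromic if and only if there is a nonempty open set $W\subsetneq\mathbb{P}^n_{\mathbb{C}}$ such that $\gamma(\overline W)\subset W$.
   Context: $\gamma\in PSL(n+1,\mathbb{C})=GL(n+1,\mathbb{C})/\mathbb{C}^*$, acting on $\mathbb{P}^n_{\mathbb{C}}$, is called loxodromic if every lift $\widetilde\gamma\in SL(n+1,\mathbb{C})$ of $\gamma$ has an eigenvalue of modulus different from $1$. *)

theory Defs
  imports "HOL-Analysis.Analysis"
begin

text \<open>Complex projective space P(V) for V = complex^'n (so CARD('n) = n+1):
  points are complex lines through the origin, represented as the set of nonzero
  vectors on the line.\<close>

definition pline :: "complex^'n \<Rightarrow> (complex^'n) set" where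
  "pline v = {c *s v | c. c \<noteq> 0}"

definition proj_space :: "(complex^'n) set set" where
  "proj_space = {pline v | v. v \<noteq> 0}"

definition proj_top :: "(complex^'n) set topology" where
  "proj_top = topology (\<lambda>U. U \<subseteq> proj_space \<and>
       open {v. v \<noteq> 0 \<and> pline v \<in> U})"

lemma istopology_proj:
  "istopology (\<lambda>U::(complex^'n) set set. U \<subseteq> proj_space \<and>
       open {v. v \<noteq> 0 \<and> pline v \<in> U})"
proof -
  have 1: "{v. v \<noteq> 0 \<and> pline v \<in> S \<inter> T} =
      {v. v \<noteq> 0 \<and> pline v \<in> S} \<inter> {v. v \<noteq> 0 \<and> pline v \<in> T}"
    for S T :: "(complex^'n) set set" by auto
  have 2: "{v. v \<noteq> 0 \<and> pline v \<in> \<Union>K} =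
      \<Union>((\<lambda>U. {v. v \<noteq> 0 \<and> pline v \<in> U}) ` K)"
    for K :: "(complex^'n) set set set" by auto
  show ?thesis
  proof (simp only: istopology_def, rule conjI; intro allI impI)
    fix S T :: "(complex^'n) set set"
    assume a: "S \<subseteq> proj_space \<and> open {v. v \<noteq> 0 \<and> pline v \<in> S}"
       "T \<subseteq> proj_space \<and> open {v. v \<noteq> 0 \<and> pline v \<in> T}"
    then show "S \<inter> T \<subseteq> proj_space \<and> open {v. v \<noteq> 0 \<and> pline v \<in> S \<inter> T}"
      unfolding 1 using open_Int[of "{v. v \<noteq> 0 \<and> pline v \<in> S}" "{v. v \<noteq> 0 \<and> pline v \<in> T}"] by blast
  next
    fix K :: "(complex^'n) set set set"
    assume a: "\<forall>U\<in>K. U \<subseteq> proj_space \<and> open {v. v \<noteq> 0 \<and> pline v \<in> U}"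
    then show "\<Union>K \<subseteq> proj_space \<and> open {v. v \<noteq> 0 \<and> pline v \<in> \<Union>K}"
      unfolding 2 by (intro conjI open_UN ballI) auto
  qed
qed

definition proj_map :: "complex^'n^'n \<Rightarrow> (complex^'n) set \<Rightarrow> (complex^'n) set" where
  "proj_map A p = pline (A *v (SOME v. v \<in> p))"

text \<open>Loxodromic: every lift to SL (i.e. every scalar multiple of A with determinant 1)
  has an eigenvalue of modulus different from 1.\<close>

definition loxodromic :: "complex^'n^'n \<Rightarrow> bool" where
  "loxodromic A \<longleftrightarrow> (\<forall>c. det (mat c ** A) = 1 \<longrightarrow>
      (\<exists>lam v. v \<noteq> 0 \<and> (mat c ** A) *v v = lam *s v \<and> norm lam \<noteq> 1))"

end

theory Submission
  imports Defs "Jordan_Normal_Form.Schur_Decomposition" "Jordan_Normal_Form.Char_Poly"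
begin

(*
  A lift A of the element is conjugate to a matrix T that is triangular with respect to some
  ordering of the coordinates, with diagonal sorted by decreasing modulus.  Conjugation transports
  both sides of the equivalence, and T is loxodromic exactly when its diagonal entries do not all
  have the same modulus.

  If the moduli differ, let L be the coordinates whose modulus exceeds the smallest one.  After a
  diagonal conjugation making the off-diagonal entries small, the lines whose l1-mass on L exceeds
  their mass off L form an attracting set: T maps even the lines with mass on L at least the mass
  off L, which contain the closure, into it.

  If all moduli are equal, let W be an attracting set and V_1 \<subset> V_2 \<subset> ... the invariant flag.
  On V_k the ratio of the two top coordinates is moved by T along an affine map
  z \<mapsto> \<alpha> z + \<beta> with |\<alpha>| = 1, which carries a continuous potential increasing by a
  constant c \<ge> 0 and having no local maximum.  Suppose the cone over W misses V_(k-1); then so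
  does the cone over the closure of W.  A point of the latter in V_k maximising the potential is
  mapped into the open cone over W, where the potential can be increased further: so the cone over
  W misses V_k as well.  Hence W contains the line V_1.  The complement of the closure of W is an
  attracting set of the inverse, so it contains V_1 too, a contradiction.
*)

no_notation Matrix.vec_index (infixl "$" 100)
no_notation Matrix.scalar_prod (infix "\<bullet>" 70)
hide_const (open) Matrix.mat Matrix.vec Determinant.det

section \<open>Matrices triangular with respect to a ranking of the coordinates\<close>

definition ranking :: "('n::finite \<Rightarrow> nat) \<Rightarrow> bool" where
  "ranking r \<longleftrightarrow> bij_betw r UNIV {..<CARD('n)}"

definition triangular_wrt :: "('n \<Rightarrow> nat) \<Rightarrow> 'a::zero^'n^'n \<Rightarrow> bool" where
  "triangular_wrt r M \<longleftrightarrow> (\<forall>i j. r j < r i \<longrightarrow> M$i$j = 0)"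

lemma ranking_exists: "\<exists>r::'n::finite \<Rightarrow> nat. ranking r"
  using ex_bij_betw_finite_nat[of "UNIV::'n set"] unfolding ranking_def
  by (auto simp: atLeast0LessThan)

lemma ranking_inj: "ranking r \<Longrightarrow> inj r"
  unfolding ranking_def by (simp add: bij_betw_def)

lemma ranking_less: "ranking (r::'n::finite \<Rightarrow> nat) \<Longrightarrow> r i < CARD('n)"
  unfolding ranking_def by (auto simp: bij_betw_def)

lemma ranking_surj: "ranking (r::'n::finite \<Rightarrow> nat) \<Longrightarrow> k < CARD('n) \<Longrightarrow> \<exists>i. r i = k"
  unfolding ranking_def bij_betw_def by (metis imageE lessThan_iff)

lemma permutation_decreases_rank:
  fixes p :: "'n::finite \<Rightarrow> 'n" and r :: "'n \<Rightarrow> nat"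
  assumes p: "p permutes UNIV" and "p \<noteq> id" and "inj r"
  shows "\<exists>i. r (p i) < r i"
proof (rule ccontr)
  assume "\<not> ?thesis"
  then have le: "r i \<le> r (p i)" for i by (simp add: not_less)
  have "r (p i) = r i" for i
  proof (rule ccontr)
    assume "r (p i) \<noteq> r i"
    then have "r i < r (p i)" using le[of i] by simp
    then have "sum r UNIV < sum (r \<circ> p) UNIV"
      using sum_strict_mono_ex1[of UNIV r "r \<circ> p"] le by auto
    moreover have "sum r UNIV = sum (r \<circ> p) UNIV" using sum.permute[OF p] by simp
    ultimately show False by simp
  qed
  then have "p = id" using \<open>inj r\<close> by (auto simp: inj_def)
  with \<open>p \<noteq> id\<close> show False ..
qed

lemma det_triangular_wrt:
  fixes M :: "'a::comm_ring_1^'n::finite^'n"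
  assumes "inj r" and "triangular_wrt r M"
  shows "det M = (\<Prod>i\<in>UNIV. M$i$i)"
proof -
  let ?pp = "\<lambda>p. of_int (sign p) * (\<Prod>i\<in>UNIV. M$i$p i)"
  have "\<forall>p \<in> {p. p permutes UNIV} - {id}. ?pp p = 0"
  proof
    fix p :: "'n \<Rightarrow> 'n" assume "p \<in> {p. p permutes UNIV} - {id}"
    then obtain i where "r (p i) < r i" using permutation_decreases_rank assms(1) by blast
    then have "M$i$p i = 0" using assms(2) unfolding triangular_wrt_def by blast
    then show "?pp p = 0" using prod_zero[of UNIV "\<lambda>i. M$i$p i"] by force
  qed
  from sum.mono_neutral_cong_left[OF finite_permutations[of UNIV] _ this] show ?thesis
    unfolding Determinants.det_def by (simp add: sign_id permutes_id)
qed

lemma matrix_vector_mul_mat: "mat c *v x = c *s (x :: 'a::semiring_1^'n::finite)"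
proof -
  have "(mat c *v x) $ j = c * x$j" for j
  proof -
    have "(mat c *v x) $ j = (\<Sum>k\<in>UNIV. (if j = k then c else 0) * x$k)"
      by (simp add: matrix_vector_mult_def Finite_Cartesian_Product.mat_def)
    also have "\<dots> = (\<Sum>k\<in>UNIV. if k = j then c * x$k else 0)" by (rule sum.cong) auto
    finally show ?thesis by simp
  qed
  then show ?thesis by (simp add: Finite_Cartesian_Product.vec_eq_iff)
qed

lemma matrix_vector_mult_axis: "(M *v axis p c)$i = M$i$p * (c::'a::semiring_1)"
proof -
  have "(M *v axis p c)$i = (\<Sum>j\<in>UNIV. M$i$j * (if j = p then c else 0))"
    unfolding matrix_vector_mult_def axis_def by simp
  also have "\<dots> = (\<Sum>j\<in>UNIV. if j = p then M$i$j * c else 0)"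
    by (rule sum.cong) auto
  finally show ?thesis by simp
qed

lemma triangular_wrt_eigenvector:
  fixes M :: "'a::field^'n::finite^'n"
  assumes "inj r" and tri: "triangular_wrt r M"
  shows "\<exists>y. y \<noteq> 0 \<and> M *v y = M$i$i *s y"
proof -
  define B where "B = M - mat (M$i$i)"
  have "triangular_wrt r B"
    using tri unfolding B_def triangular_wrt_def by (auto simp: Finite_Cartesian_Product.mat_def)
  then have "det B = (\<Prod>j\<in>UNIV. B$j$j)" using det_triangular_wrt[OF \<open>inj r\<close>] by blast
  also have "\<dots> = 0"
    by (rule prod_zero) (auto simp: B_def Finite_Cartesian_Product.mat_def)
  finally have "\<not> (\<forall>x. B *v x = 0 \<longrightarrow> x = 0)"
    using invertible_det_nz invertible_left_inverse matrix_left_invertible_ker by metis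
  then obtain y where "B *v y = 0" "y \<noteq> 0" by blast
  then show ?thesis
    unfolding B_def by (auto simp: matrix_vector_mult_diff_rdistrib matrix_vector_mul_mat)
qed

lemma triangular_wrt_eigenvalue_diag:
  fixes M :: "'a::idom^'n::finite^'n"
  assumes inj: "inj r" and tri: "triangular_wrt r M"
    and ev: "M *v y = \<mu> *s y" and "y \<noteq> 0"
  shows "\<exists>i. \<mu> = M$i$i"
proof -
  \<comment> \<open>the nonzero coordinate of largest rank sees only the diagonal entry\<close>
  let ?S = "{i. y$i \<noteq> 0}"
  have "?S \<noteq> {}"
  proof
    assume "?S = {}"
    then have "y = 0" by (simp add: Finite_Cartesian_Product.vec_eq_iff)
    with \<open>y \<noteq> 0\<close> show False ..
  qed
  then have "Max (r ` ?S) \<in> r ` ?S" by (intro Max_in) auto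
  then obtain i where i: "i \<in> ?S" and "Max (r ` ?S) = r i" by (rule imageE) simp
  then have max: "r j \<le> r i" if "j \<in> ?S" for j using that by (metis Max_ge finite finite_imageI imageI)
  have "M$i$j * y$j = 0" if "j \<noteq> i" for j
  proof (cases "r j < r i")
    case True then show ?thesis using tri unfolding triangular_wrt_def by simp
  next
    case False
    with that inj have "r i < r j" by (metis inj_eq linorder_neqE_nat)
    then show ?thesis using max by force
  qed
  then have "(\<Sum>j\<in>UNIV - {i}. M$i$j * y$j) = 0" by (intro sum.neutral) auto
  then have "(M *v y)$i = M$i$i * y$i"
    unfolding matrix_vector_mult_def by (simp add: sum.remove[of UNIV i])
  then show ?thesis using ev i by auto
qed

lemma triangular_wrt_has_eigenvalue_iff:
  fixes M :: "'a::field^'n::finite^'n"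
  assumes "inj r" and "triangular_wrt r M"
  shows "(\<exists>y. y \<noteq> 0 \<and> M *v y = \<mu> *s y) \<longleftrightarrow> (\<exists>i. \<mu> = M$i$i)"
  using triangular_wrt_eigenvector[OF assms] triangular_wrt_eigenvalue_diag[OF assms] by blast

definition flag :: "('n \<Rightarrow> nat) \<Rightarrow> nat \<Rightarrow> ('a::zero^'n) set" where
  "flag r k = {y. \<forall>i. k \<le> r i \<longrightarrow> y$i = 0}"

lemma flag_0: "flag r 0 = {0}"
  unfolding flag_def by (auto simp: Finite_Cartesian_Product.vec_eq_iff)

lemma flag_CARD:
  assumes "ranking (r::'n::finite \<Rightarrow> nat)"
  shows "flag r CARD('n) = UNIV"
proof -
  have "\<not> CARD('n) \<le> r i" for i using ranking_less[OF assms, of i] by simp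
  then show ?thesis unfolding flag_def by auto
qed

lemma flag_mono: "k \<le> l \<Longrightarrow> flag r k \<subseteq> flag r l"
  unfolding flag_def by auto

lemma flag_smult: "y \<in> flag r k \<Longrightarrow> c *s (y :: 'a::mult_zero^'n) \<in> flag r k"
  unfolding flag_def by simp

lemma flag_add: "y \<in> flag r k \<Longrightarrow> z \<in> flag r k \<Longrightarrow> y + (z :: 'a::monoid_add^'n) \<in> flag r k"
  unfolding flag_def by simp

lemma closed_flag: "closed (flag r k :: ('a::real_normed_vector^'n) set)"
  unfolding flag_def by (rule closed_substandard_cart)

lemma flag_SucD:
  assumes "inj r" and y: "y \<in> flag r (Suc (r p))" and "y$p = 0"
  shows "y \<in> flag r (r p)"
  unfolding flag_def
proof (intro CollectI allI impI)
  fix i assume "r p \<le> r i"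
  show "y$i = 0"
  proof (cases "i = p")
    case False
    then have "r i \<noteq> r p" using \<open>inj r\<close> by (simp add: inj_eq)
    then have "Suc (r p) \<le> r i" using \<open>r p \<le> r i\<close> by simp
    then show ?thesis using y unfolding flag_def by simp
  qed (use \<open>y$p = 0\<close> in simp)
qed

lemma flag_1:
  fixes y :: "'a::semiring_1^'n"
  assumes "inj r" and "r p = 0" and y: "y \<in> flag r 1"
  shows "y = y$p *s axis p 1"
proof -
  have "y$i = 0" if "i \<noteq> p" for i
  proof -
    have "r i \<noteq> 0" using that assms(1,2) by (metis inj_eq)
    then show ?thesis using y unfolding flag_def by simp
  qed
  then show ?thesis by (simp add: Finite_Cartesian_Product.vec_eq_iff axis_def)
qed

lemma triangular_wrt_flag:
  fixes M :: "'a::comm_semiring_1^'n::finite^'n"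
  assumes tri: "triangular_wrt r M" and y: "y \<in> flag r k"
  shows "M *v y \<in> flag r k"
  unfolding flag_def
proof (intro CollectI allI impI)
  fix i assume "k \<le> r i"
  have "M$i$j * y$j = 0" for j
  proof (cases "r j < r i")
    case True then show ?thesis using tri unfolding triangular_wrt_def by simp
  next
    case False then show ?thesis using y \<open>k \<le> r i\<close> unfolding flag_def by simp
  qed
  then show "(M *v y)$i = 0" by (simp add: matrix_vector_mult_def)
qed

lemma triangular_wrt_flag_reduce:
  fixes M :: "'a::field^'n::finite^'n"
  assumes tri: "triangular_wrt r M" and r: "ranking r" and nz: "\<And>i. M$i$i \<noteq> 0"
    and p: "r p = k" and y: "y \<in> flag r (Suc k)"
  shows "y - M *v axis p (y$p / M$p$p) \<in> flag r k"
  unfolding flag_def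
proof (intro CollectI allI impI)
  fix i assume "k \<le> r i"
  have Mx: "(M *v axis p (y$p / M$p$p))$i = M$i$p * (y$p / M$p$p)"
    by (rule matrix_vector_mult_axis)
  show "(y - M *v axis p (y$p / M$p$p))$i = 0"
  proof (cases "i = p")
    case True
    then show ?thesis using Mx nz[of p] by simp
  next
    case False
    then have "r i \<noteq> r p" using ranking_inj[OF r] by (simp add: inj_eq)
    then have "Suc k \<le> r i" using \<open>k \<le> r i\<close> p by simp
    then have "y$i = 0" "M$i$p = 0" using y tri p unfolding flag_def triangular_wrt_def by simp_all
    then show ?thesis using Mx by simp
  qed
qed

lemma triangular_wrt_flag_surj:
  fixes M :: "'a::field^'n::finite^'n"
  assumes tri: "triangular_wrt r M" and r: "ranking r" and nz: "\<And>i. M$i$i \<noteq> 0"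
  shows "y \<in> flag r k \<Longrightarrow> \<exists>x\<in>flag r k. M *v x = y"
proof (induction k arbitrary: y)
  case 0
  then have "y = 0" by (simp add: flag_0)
  then show ?case by (intro bexI[of _ 0]) (simp_all add: flag_0)
next
  case (Suc k)
  show ?case
  proof (cases "k < CARD('n)")
    case False
    have "\<not> k \<le> r i" for i using ranking_less[OF r, of i] False by simp
    then have "y \<in> flag r k" unfolding flag_def by simp
    then obtain x where "x \<in> flag r k" "M *v x = y" using Suc.IH by blast
    moreover have "flag r k \<subseteq> flag r (Suc k)" by (rule flag_mono) simp
    ultimately show ?thesis by blast
  next
    case True
    \<comment> \<open>solve for the coordinate of rank \<open>k\<close>, then recurse on the remainder\<close>
    then obtain p where p: "r p = k" using ranking_surj[OF r] by blast
    define x1 where "x1 = axis p (y$p / M$p$p)"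
    have "y - M *v x1 \<in> flag r k"
      unfolding x1_def using triangular_wrt_flag_reduce[OF tri r nz p Suc.prems] .
    then obtain x2 where x2: "x2 \<in> flag r k" "M *v x2 = y - M *v x1" using Suc.IH by blast
    have "x1 + x2 \<in> flag r (Suc k)" unfolding flag_def
    proof (intro CollectI allI impI)
      fix i assume "Suc k \<le> r i"
      then have "i \<noteq> p" "k \<le> r i" using p by auto
      moreover have "x1$i = 0" using \<open>i \<noteq> p\<close> unfolding x1_def axis_def by simp
      ultimately show "(x1 + x2)$i = 0" using x2(1) unfolding flag_def by simp
    qed
    moreover have "M *v (x1 + x2) = y" using x2(2) by (simp add: matrix_vector_right_distrib)
    ultimately show ?thesis by blast
  qed
qed

lemma triangular_wrt_coord_top:
  fixes M :: "'a::comm_semiring_1^'n::finite^'n"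
  assumes tri: "triangular_wrt r M" and "inj r" and y: "y \<in> flag r (Suc (r p))"
  shows "(M *v y)$p = M$p$p * y$p"
proof -
  have "M$p$l * y$l = 0" if "l \<noteq> p" for l
  proof -
    have "r l \<noteq> r p" using that \<open>inj r\<close> by (simp add: inj_eq)
    then consider "r l < r p" | "Suc (r p) \<le> r l" by linarith
    then show ?thesis using tri y unfolding triangular_wrt_def flag_def by cases simp_all
  qed
  then have "(\<Sum>l\<in>UNIV. M$p$l * y$l) = (\<Sum>l\<in>{p}. M$p$l * y$l)"
    by (intro sum.mono_neutral_right) auto
  then show ?thesis unfolding matrix_vector_mult_def by simp
qed

lemma triangular_wrt_coord_next:
  fixes M :: "'a::comm_semiring_1^'n::finite^'n"
  assumes tri: "triangular_wrt r M" and "inj r" and pq: "r p = Suc (r q)"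
    and y: "y \<in> flag r (Suc (r p))"
  shows "(M *v y)$q = M$q$q * y$q + M$q$p * y$p"
proof -
  have "p \<noteq> q" using pq by auto
  have "M$q$l * y$l = 0" if "l \<notin> {q, p}" for l
  proof -
    have "r l \<noteq> r p" "r l \<noteq> r q" using that \<open>inj r\<close> by (auto simp: inj_eq)
    then consider "r l < r q" | "Suc (r p) \<le> r l" using pq by linarith
    then show ?thesis using tri y unfolding triangular_wrt_def flag_def by cases simp_all
  qed
  then have "(\<Sum>l\<in>UNIV. M$q$l * y$l) = (\<Sum>l\<in>{q,p}. M$q$l * y$l)"
    by (intro sum.mono_neutral_right) auto
  then show ?thesis using \<open>p \<noteq> q\<close> unfolding matrix_vector_mult_def by simp
qed

lemma triangular_wrt_inverse:
  fixes T :: "'a::field^'n::finite^'n"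
  assumes r: "ranking r" and tri: "triangular_wrt r T"
    and inv: "T ** Ti = mat 1" "Ti ** T = mat 1"
  shows "triangular_wrt r Ti" and "\<And>i. Ti$i$i * T$i$i = 1"
proof -
  have "det T * det Ti = 1" using inv(1) by (metis det_I det_mul)
  then have "(\<Prod>i\<in>UNIV. T$i$i) \<noteq> 0"
    using det_triangular_wrt[OF ranking_inj[OF r] tri] by (metis mult_zero_left zero_neq_one)
  then have nz: "T$i$i \<noteq> 0" for i using prod_zero[of UNIV "\<lambda>i. T$i$i"] by auto
  \<comment> \<open>column \<open>j\<close> of \<open>Ti\<close> is the preimage of \<open>axis j 1\<close> inside the flag\<close>
  have col: "Ti$i$j = x$i" if "T *v x = axis j 1" for x i j
  proof -
    have "Ti *v (T *v x) = x" by (simp add: matrix_vector_mul_assoc inv(2))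
    then show ?thesis using that matrix_vector_mult_axis[of Ti j 1 i] by simp
  qed
  have "axis j 1 \<in> flag r (Suc (r j))" for j by (simp add: flag_def axis_def)
  then have pre: "\<exists>x\<in>flag r (Suc (r j)). T *v x = axis j 1" for j
    by (rule triangular_wrt_flag_surj[OF tri r nz])
  show "triangular_wrt r Ti" unfolding triangular_wrt_def
  proof (intro allI impI)
    fix i j assume "r j < r i"
    obtain x where "x \<in> flag r (Suc (r j))" "T *v x = axis j 1" using pre by blast
    then show "Ti$i$j = 0" using col \<open>r j < r i\<close> unfolding flag_def by simp
  qed
  show "Ti$i$i * T$i$i = 1" for i
  proof -
    obtain x where x: "x \<in> flag r (Suc (r i))" "T *v x = axis i 1" using pre by blast
    have "T$i$i * x$i = 1"
      using triangular_wrt_coord_top[OF tri ranking_inj[OF r] x(1)] x(2) by simp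
    then show ?thesis using col[OF x(2)] by (simp add: mult.commute)
  qed
qed

section \<open>Schur form with diagonal sorted by decreasing modulus\<close>

lemma schur_decomposition_sorted:
  fixes M :: "complex mat"
  assumes M: "M \<in> carrier_mat n n"
  obtains B P Q where "similar_mat_wit M B P Q" "upper_triangular B"
    "\<And>i j. i \<le> j \<Longrightarrow> j < n \<Longrightarrow> cmod (B$$(j,j)) \<le> cmod (B$$(i,i))"
proof -
  obtain as where as: "char_poly M = (\<Prod>a\<leftarrow>as. [:- a, 1:])" "length as = n"
    using char_poly_factorized[OF M] by blast
  define es where "es = sort_key (\<lambda>x. - cmod x) as"
  have ms: "mset es = mset as" unfolding es_def by simp
  have "(\<Prod>a\<leftarrow>es. [:- a, 1:]) = (\<Prod>a\<leftarrow>as. [:- a, 1:])"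
    by (metis mset_map ms prod_mset_prod_list)
  with as have cp: "char_poly M = (\<Prod>a\<leftarrow>es. [:- a, 1:])" by simp
  obtain B P Q where sd: "schur_decomposition M es = (B,P,Q)"
    by (cases "schur_decomposition M es") auto
  from schur_decomposition[OF M cp sd] have sw: "similar_mat_wit M B P Q"
    and ut: "upper_triangular B" and dg: "diag_mat B = es" by auto
  have Bc: "B \<in> carrier_mat n n" using similar_mat_witD2[OF M sw] by auto
  have len: "length es = n" using ms as(2) by (metis size_mset)
  have sorted: "sorted (map (\<lambda>x. - cmod x) es)" unfolding es_def by simp
  have "cmod (B$$(j,j)) \<le> cmod (B$$(i,i))" if "i \<le> j" "j < n" for i j
  proof -
    have "B$$(i,i) = es!i" "B$$(j,j) = es!j" using dg Bc that unfolding diag_mat_def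
      by (auto dest!: arg_cong[where f="\<lambda>l. l!i"] arg_cong[where f="\<lambda>l. l!j"])
    moreover have "- cmod (es!i) \<le> - cmod (es!j)"
      using sorted_nth_mono[OF sorted that(1)] that len by simp
    ultimately show ?thesis by simp
  qed
  with sw ut that show thesis by blast
qed

definition of_mat :: "('n \<Rightarrow> nat) \<Rightarrow> complex mat \<Rightarrow> complex^'n^'n" where
  "of_mat r M = (\<chi> i j. M $$ (r i, r j))"

definition to_mat :: "('n::finite \<Rightarrow> nat) \<Rightarrow> complex^'n^'n \<Rightarrow> complex mat" where
  "to_mat r A = Matrix.mat CARD('n) CARD('n) (\<lambda>(i,j). A $ inv_into UNIV r i $ inv_into UNIV r j)"

lemma of_mat_to_mat:
  fixes A :: "complex^'n::finite^'n"
  assumes r: "ranking r"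
  shows "of_mat r (to_mat r A) = A"
proof -
  have "inv_into UNIV r (r i) = i" for i using ranking_inj[OF r] by simp
  moreover have "r i < CARD('n)" for i using ranking_less[OF r] .
  ultimately show ?thesis unfolding of_mat_def to_mat_def by (simp add: Finite_Cartesian_Product.vec_eq_iff)
qed

lemma to_mat_carrier: "to_mat r (A::complex^'n::finite^'n) \<in> carrier_mat CARD('n) CARD('n)"
  unfolding to_mat_def by simp

lemma of_mat_mult:
  assumes r: "ranking r"
    and X: "X \<in> carrier_mat CARD('n) CARD('n)" and Y: "Y \<in> carrier_mat CARD('n) CARD('n)"
  shows "of_mat r (X * Y) = (of_mat r X :: complex^'n::finite^'n) ** of_mat r Y"
proof -
  have "(X * Y) $$ (r i, r j) = (\<Sum>k\<in>UNIV. X $$ (r i, r k) * Y $$ (r k, r j))" for i j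
  proof -
    have "(X * Y) $$ (r i, r j) = (\<Sum>k<CARD('n). X $$ (r i, k) * Y $$ (k, r j))"
      using X Y ranking_less[OF r] by (simp add: scalar_prod_def atLeast0LessThan)
    also have "\<dots> = (\<Sum>k\<in>UNIV. X $$ (r i, r k) * Y $$ (r k, r j))"
      using sum.reindex_bij_betw[OF r[unfolded ranking_def],
          of "\<lambda>k. X $$ (r i, k) * Y $$ (k, r j)"] by simp
    finally show ?thesis .
  qed
  then show ?thesis unfolding of_mat_def by (simp add: Finite_Cartesian_Product.vec_eq_iff matrix_matrix_mult_def)
qed

lemma of_mat_one:
  assumes r: "ranking r"
  shows "of_mat r (1\<^sub>m CARD('n)) = (mat 1 :: complex^'n::finite^'n)"
proof -
  have "r i = r j \<longleftrightarrow> i = j" for i j using ranking_inj[OF r] by (simp add: inj_eq)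
  then show ?thesis unfolding of_mat_def using ranking_less[OF r] by (simp add: Finite_Cartesian_Product.vec_eq_iff Finite_Cartesian_Product.mat_def)
qed

lemma schur_triangularization_sorted:
  fixes A :: "complex^'n::finite^'n"
  obtains r :: "'n \<Rightarrow> nat" and Q Qi T :: "complex^'n^'n"
  where "ranking r" "Q ** Qi = mat 1" "Qi ** Q = mat 1" "A = Qi ** T ** Q"
    "triangular_wrt r T" "\<And>i j. r i \<le> r j \<Longrightarrow> cmod (T$j$j) \<le> cmod (T$i$i)"
proof -
  obtain r :: "'n \<Rightarrow> nat" where r: "ranking r" using ranking_exists by blast
  obtain B P Q where sw: "similar_mat_wit (to_mat r A) B P Q" and ut: "upper_triangular B"
    and sorted: "\<And>i j. i \<le> j \<Longrightarrow> j < CARD('n) \<Longrightarrow> cmod (B$$(j,j)) \<le> cmod (B$$(i,i))"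
    using schur_decomposition_sorted[OF to_mat_carrier] by blast
  have c: "B \<in> carrier_mat CARD('n) CARD('n)" "P \<in> carrier_mat CARD('n) CARD('n)"
    "Q \<in> carrier_mat CARD('n) CARD('n)" and PQ: "P * Q = 1\<^sub>m CARD('n)" "Q * P = 1\<^sub>m CARD('n)"
    and eq: "to_mat r A = P * B * Q"
    using similar_mat_witD2[OF to_mat_carrier sw] by blast+
  show ?thesis
  proof
    show "of_mat r Q ** of_mat r P = mat 1"
      using of_mat_mult[OF r c(3) c(2)] PQ of_mat_one[OF r] by simp
    show "of_mat r P ** of_mat r Q = mat 1"
      using of_mat_mult[OF r c(2) c(3)] PQ of_mat_one[OF r] by simp
    have "A = of_mat r (P * B * Q)" using eq of_mat_to_mat[OF r] by metis
    also have "\<dots> = of_mat r P ** of_mat r B ** of_mat r Q"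
      using of_mat_mult[OF r _ c(3), of "P * B"] of_mat_mult[OF r c(2) c(1)] c by simp
    finally show "A = of_mat r P ** of_mat r B ** of_mat r Q" .
    show "triangular_wrt r (of_mat r B)"
      using ut c ranking_less[OF r] unfolding upper_triangular_def of_mat_def triangular_wrt_def
      by simp
    show "cmod (of_mat r B $ j $ j) \<le> cmod (of_mat r B $ i $ i)" if "r i \<le> r j" for i j
      using sorted that ranking_less[OF r] unfolding of_mat_def by simp
  qed (fact r)
qed

section \<open>Projective space\<close>

definition cone_over :: "(complex^'n) set set \<Rightarrow> (complex^'n) set" where
  "cone_over W = {v. v \<noteq> 0 \<and> pline v \<in> W}"

lemma pline_smult:
  assumes "c \<noteq> 0"
  shows "pline (c *s x) = pline x"
proof
  show "pline (c *s x) \<subseteq> pline x"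
  proof
    fix w assume "w \<in> pline (c *s x)"
    then obtain d where "d \<noteq> 0" "w = d *s (c *s x)" unfolding pline_def by blast
    then have "w = (d * c) *s x" "d * c \<noteq> 0" using assms by (simp_all add: vector_smult_assoc)
    then show "w \<in> pline x" unfolding pline_def by blast
  qed
  show "pline x \<subseteq> pline (c *s x)"
  proof
    fix w assume "w \<in> pline x"
    then obtain d where "d \<noteq> 0" "w = d *s x" unfolding pline_def by blast
    then have "w = (d / c) *s (c *s x)" "d / c \<noteq> 0" using assms by (simp_all add: vector_smult_assoc)
    then show "w \<in> pline (c *s x)" unfolding pline_def by blast
  qed
qed

lemma pline_self: "v \<in> pline v"
  unfolding pline_def by (rule CollectI, rule exI[of _ 1]) simp

lemma pline_memD: "w \<in> pline v \<Longrightarrow> \<exists>c. c \<noteq> 0 \<and> w = c *s v"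
  unfolding pline_def by blast

lemma pline_eqD: "pline u = pline v \<Longrightarrow> \<exists>c. c \<noteq> 0 \<and> u = c *s v"
  using pline_memD[of u v] pline_self[of u] by simp

lemma proj_map_pline: "proj_map A (pline v) = pline (A *v v)"
proof -
  have "\<exists>w. w \<in> pline v" using pline_self by blast
  then have "(SOME w. w \<in> pline v) \<in> pline v" by (rule someI_ex)
  then obtain c where "c \<noteq> 0" "(SOME w. w \<in> pline v) = c *s v" using pline_memD by blast
  then show ?thesis unfolding proj_map_def by (simp add: vector_scalar_commute pline_smult)
qed

lemma openin_proj_top: "openin proj_top W \<longleftrightarrow> W \<subseteq> proj_space \<and> open (cone_over W)"
  unfolding proj_top_def cone_over_def by (simp only: topology_inverse'[OF istopology_proj])

lemma topspace_proj_top: "topspace proj_top = (proj_space :: (complex^'n) set set)"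
proof
  show "topspace proj_top \<subseteq> proj_space"
    unfolding topspace_def using openin_proj_top by blast
  have "cone_over (proj_space :: (complex^'n) set set) = - {0}"
    unfolding proj_space_def cone_over_def by auto
  then have "openin proj_top (proj_space :: (complex^'n) set set)"
    unfolding openin_proj_top by (simp add: open_Compl)
  then show "proj_space \<subseteq> topspace (proj_top :: (complex^'n) set topology)"
    by (rule openin_subset)
qed

lemma cone_over_smult: "c \<noteq> 0 \<Longrightarrow> c *s v \<in> cone_over W \<longleftrightarrow> v \<in> cone_over W"
  unfolding cone_over_def by (simp add: pline_smult)

lemma closed_cone_over:
  assumes "closedin proj_top D"
  shows "closed (insert 0 (cone_over D))"
proof -
  have "- insert 0 (cone_over D) = cone_over (topspace proj_top - D)"
    unfolding cone_over_def topspace_proj_top proj_space_def by auto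
  moreover have "openin proj_top (topspace proj_top - D)" using assms by (simp add: closedin_def)
  ultimately show ?thesis unfolding openin_proj_top by (simp add: closed_open)
qed

definition scale_invariant :: "(complex^'n \<Rightarrow> bool) \<Rightarrow> bool" where
  "scale_invariant Q \<longleftrightarrow> (\<forall>v c. c \<noteq> 0 \<longrightarrow> Q (c *s v) = Q v)"

definition proj_set :: "(complex^'n \<Rightarrow> bool) \<Rightarrow> (complex^'n) set set" where
  "proj_set Q = {pline v | v. v \<noteq> 0 \<and> Q v}"

lemma pline_in_proj_set:
  assumes "scale_invariant Q"
  shows "pline v \<in> proj_set Q \<longleftrightarrow> v \<noteq> 0 \<and> Q v"
proof
  assume "pline v \<in> proj_set Q"
  then obtain w where w: "w \<noteq> 0" "Q w" "pline v = pline w" unfolding proj_set_def by blast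
  then obtain c where "c \<noteq> 0" "v = c *s w" using pline_eqD by blast
  then show "v \<noteq> 0 \<and> Q v" using assms w unfolding scale_invariant_def by simp
qed (auto simp: proj_set_def)

lemma proj_set_subset: "proj_set Q \<subseteq> proj_space"
  unfolding proj_set_def proj_space_def by blast

lemma openin_proj_set:
  assumes "scale_invariant Q" and "open {v. v \<noteq> 0 \<and> Q v}"
  shows "openin proj_top (proj_set Q)"
  using assms proj_set_subset unfolding openin_proj_top cone_over_def
  by (simp add: pline_in_proj_set)

lemma closedin_proj_set:
  assumes Q: "scale_invariant Q" and "open {v. v \<noteq> 0 \<and> \<not> Q v}"
  shows "closedin proj_top (proj_set Q)"
proof -
  have "scale_invariant (\<lambda>v. \<not> Q v)" using Q unfolding scale_invariant_def by simp
  then have "openin proj_top (proj_set (\<lambda>v. \<not> Q v))" using assms(2) by (rule openin_proj_set)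
  moreover have "proj_set (\<lambda>v. \<not> Q v) = topspace proj_top - proj_set Q"
  proof -
    have "x \<in> proj_set (\<lambda>v. \<not> Q v) \<longleftrightarrow> x \<in> proj_space \<and> x \<notin> proj_set Q" for x
    proof
      assume "x \<in> proj_set (\<lambda>v. \<not> Q v)"
      then obtain v where "x = pline v" "v \<noteq> 0" "\<not> Q v" unfolding proj_set_def by blast
      then show "x \<in> proj_space \<and> x \<notin> proj_set Q"
        using pline_in_proj_set[OF Q] unfolding proj_space_def by blast
    next
      assume "x \<in> proj_space \<and> x \<notin> proj_set Q"
      then obtain v where "x = pline v" "v \<noteq> 0" "\<not> Q v"
        using pline_in_proj_set[OF Q] unfolding proj_space_def by blast
      then show "x \<in> proj_set (\<lambda>v. \<not> Q v)" unfolding proj_set_def by blast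
    qed
    then show ?thesis unfolding topspace_proj_top by blast
  qed
  ultimately show ?thesis using proj_set_subset[of Q] by (simp add: closedin_def topspace_proj_top)
qed

lemma pline_in_proj_space: "v \<noteq> 0 \<Longrightarrow> pline v \<in> proj_space"
  unfolding proj_space_def by blast

lemma proj_space_cases:
  assumes "x \<in> proj_space"
  obtains v where "v \<noteq> 0" "x = pline v"
  using assms unfolding proj_space_def by blast

lemma continuous_map_proj_map:
  fixes A Ai :: "complex^'n^'n"
  assumes inv: "Ai ** A = mat 1"
  shows "continuous_map proj_top proj_top (proj_map A)"
  unfolding continuous_map_def topspace_proj_top
proof (intro conjI allI impI Pi_I)
  have nz: "A *v v \<noteq> 0" if "v \<noteq> 0" for v
  proof
    assume "A *v v = 0"
    then have "Ai *v (A *v v) = 0" by simp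
    then show False using that inv by (simp add: matrix_vector_mul_assoc)
  qed
  show "proj_map A x \<in> proj_space" if "x \<in> proj_space" for x
    using that by (cases rule: proj_space_cases) (simp add: proj_map_pline nz pline_in_proj_space)
  fix U :: "(complex^'n) set set" assume "openin proj_top U"
  then have U: "U \<subseteq> proj_space" "open (cone_over U)" unfolding openin_proj_top by auto
  have "v \<in> cone_over {x \<in> proj_space. proj_map A x \<in> U} \<longleftrightarrow> A *v v \<in> cone_over U" for v
  proof (cases "v = 0")
    case False
    then show ?thesis using nz[OF False]
      unfolding cone_over_def by (simp add: proj_map_pline pline_in_proj_space)
  qed (simp add: cone_over_def)
  then have "cone_over {x \<in> proj_space. proj_map A x \<in> U} = (\<lambda>v. A *v v) -` cone_over U"
    by blast
  moreover have "open ((\<lambda>v. A *v v) -` cone_over U)"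
    using U(2) matrix_vector_mult_linear_continuous_at by (rule continuous_open_vimage)
  ultimately show "openin proj_top {x \<in> proj_space. proj_map A x \<in> U}"
    unfolding openin_proj_top by auto
qed

lemma homeomorphic_maps_proj_map:
  fixes A Ai :: "complex^'n^'n"
  assumes "A ** Ai = mat 1" and "Ai ** A = mat 1"
  shows "homeomorphic_maps proj_top proj_top (proj_map A) (proj_map Ai)"
  unfolding homeomorphic_maps_def topspace_proj_top
proof (intro conjI ballI)
  show "continuous_map proj_top proj_top (proj_map A)" "continuous_map proj_top proj_top (proj_map Ai)"
    using assms by (simp_all add: continuous_map_proj_map)
  show "proj_map Ai (proj_map A x) = x" "proj_map A (proj_map Ai x) = x"
    if "x \<in> proj_space" for x
    using that by (cases rule: proj_space_cases; simp add: proj_map_pline matrix_vector_mul_assoc assms)+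
qed

section \<open>Attracting sets\<close>

definition attracting_set :: "complex^'n^'n \<Rightarrow> (complex^'n) set set \<Rightarrow> bool" where
  "attracting_set A W \<longleftrightarrow> openin proj_top W \<and> W \<noteq> {} \<and> W \<subset> topspace proj_top \<and>
     proj_map A ` (proj_top closure_of W) \<subseteq> W"

lemma attracting_set_conj:
  fixes A P P' :: "complex^'n^'n"
  assumes inv: "P ** P' = mat 1" "P' ** P = mat 1" and W: "attracting_set A W"
  shows "attracting_set (P ** A ** P') (proj_map P ` W)"
proof -
  let ?h = "proj_map P" and ?X = "proj_top :: (complex^'n) set topology"
  have hom: "homeomorphic_map ?X ?X ?h"
    using homeomorphic_maps_proj_map[OF inv] homeomorphic_map_maps by blast
  from W have WX: "W \<subseteq> topspace ?X" and "W \<noteq> topspace ?X" and "W \<noteq> {}" and "openin ?X W"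
    and img: "proj_map A ` (?X closure_of W) \<subseteq> W"
    unfolding attracting_set_def by auto
  have inj: "inj_on ?h (topspace ?X)" using hom by (rule homeomorphic_imp_injective_map)
  have surj: "?h ` topspace ?X = topspace ?X" using hom by (rule homeomorphic_imp_surjective_map)
  have "?h ` W \<noteq> topspace ?X"
  proof
    assume "?h ` W = topspace ?X"
    then have "?h ` W = ?h ` topspace ?X" using surj by simp
    then show False using inj WX \<open>W \<noteq> topspace ?X\<close> by (simp add: inj_on_image_eq_iff)
  qed
  then have proper: "?h ` W \<subset> topspace ?X" using WX surj by blast
  have PAP: "P ** A ** P' ** P = P ** A" by (simp add: matrix_mul_assoc[symmetric] inv(2))
  have comm: "proj_map (P ** A ** P') (?h y) = ?h (proj_map A y)" if "y \<in> topspace ?X" for y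
    using that unfolding topspace_proj_top
    by (cases rule: proj_space_cases) (simp add: proj_map_pline matrix_vector_mul_assoc PAP)
  have "proj_map (P ** A ** P') ` (?X closure_of (?h ` W)) \<subseteq> ?h ` W"
  proof
    fix z assume "z \<in> proj_map (P ** A ** P') ` (?X closure_of (?h ` W))"
    then obtain y where "y \<in> ?X closure_of W" "z = proj_map (P ** A ** P') (?h y)"
      unfolding homeomorphic_map_closure_of[OF hom WX] by blast
    moreover from this have "y \<in> topspace ?X" using closure_of_subset_topspace[of ?X W] by blast
    ultimately show "z \<in> ?h ` W" using comm img by blast
  qed
  moreover have "openin ?X (?h ` W)"
    using homeomorphic_map_openness[OF hom WX] \<open>openin ?X W\<close> by blast
  ultimately show ?thesis using \<open>W \<noteq> {}\<close> proper unfolding attracting_set_def by blast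
qed

lemma attracting_set_inverse:
  fixes A Ai :: "complex^'n^'n"
  assumes inv: "A ** Ai = mat 1" "Ai ** A = mat 1" and W: "attracting_set A W"
  shows "attracting_set Ai (topspace proj_top - proj_top closure_of W)"
proof -
  let ?X = "proj_top :: (complex^'n) set topology"
  let ?W' = "topspace ?X - ?X closure_of W"
  from W have WX: "W \<subseteq> topspace ?X" and "W \<noteq> topspace ?X" and "W \<noteq> {}" and oW: "openin ?X W"
    and img: "proj_map A ` (?X closure_of W) \<subseteq> W"
    unfolding attracting_set_def by auto
  have hom: "homeomorphic_maps ?X ?X (proj_map A) (proj_map Ai)"
    using homeomorphic_maps_proj_map[OF inv] .
  have A_Ai: "proj_map A (proj_map Ai x) = x" if "x \<in> topspace ?X" for x
    using hom that unfolding homeomorphic_maps_def by blast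
  have Ai_X: "proj_map Ai x \<in> topspace ?X" if "x \<in> topspace ?X" for x
    using hom that continuous_map_image_subset_topspace[of ?X ?X "proj_map Ai"]
    unfolding homeomorphic_maps_def by blast
  \<comment> \<open>if the closure of \<open>W\<close> were everything, \<open>W\<close> would contain the image of everything\<close>
  have "?W' \<noteq> {}"
  proof
    assume "?W' = {}"
    then have "proj_map Ai x \<in> ?X closure_of W" if "x \<in> topspace ?X" for x
      using Ai_X[OF that] by blast
    then have "x \<in> W" if "x \<in> topspace ?X" for x
      using img A_Ai[OF that] that by blast
    then show False using WX \<open>W \<noteq> topspace ?X\<close> by blast
  qed
  moreover have "?W' \<subset> topspace ?X"
    using \<open>W \<noteq> {}\<close> WX closure_of_subset[OF WX] by blast
  moreover have "W \<subseteq> ?X interior_of (?X closure_of W)"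
    using closure_of_subset[OF WX] oW by (rule interior_of_maximal)
  then have "?X closure_of ?W' \<subseteq> topspace ?X - W"
    unfolding closure_of_complement by blast
  then have "proj_map Ai ` (?X closure_of ?W') \<subseteq> ?W'"
    using img A_Ai Ai_X by blast
  moreover have "openin ?X ?W'" by (simp add: openin_diff)
  ultimately show ?thesis unfolding attracting_set_def by blast
qed

lemma ex_attracting_set_conj:
  fixes T P P' :: "complex^'n^'n"
  assumes inv: "P ** P' = mat 1" "P' ** P = mat 1"
  shows "(\<exists>W. attracting_set (P' ** T ** P) W) \<longleftrightarrow> (\<exists>W. attracting_set T W)"
proof
  assume "\<exists>W. attracting_set (P' ** T ** P) W"
  then obtain W where "attracting_set (P ** (P' ** T ** P) ** P') (proj_map P ` W)"
    using attracting_set_conj[OF inv] by blast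
  moreover have "P ** (P' ** T ** P) ** P' = (P ** P') ** T ** (P ** P')"
    by (simp add: matrix_mul_assoc)
  ultimately show "\<exists>W. attracting_set T W" using inv(1) by auto
next
  assume "\<exists>W. attracting_set T W"
  then show "\<exists>W. attracting_set (P' ** T ** P) W" using attracting_set_conj[OF inv(2,1)] by blast
qed

section \<open>Loxodromic elements and moduli of eigenvalues\<close>

lemma det_mat: "det (mat c :: 'a::comm_ring_1^'n::finite^'n) = c ^ CARD('n)"
  by (simp add: det_diagonal Finite_Cartesian_Product.mat_def)

lemma left_inverse_mult_eq_0_iff:
  fixes P P' :: "'a::field^'n::finite^'n"
  assumes "P' ** P = mat 1"
  shows "P *v v = 0 \<longleftrightarrow> v = 0"
proof -
  have "v = P' *v (P *v v)" by (simp add: matrix_vector_mul_assoc assms)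
  then show ?thesis by auto
qed

lemma loxodromic_iff_eigenvalues:
  fixes A :: "complex^'n^'n"
  shows "loxodromic A \<longleftrightarrow> (\<forall>c. c ^ CARD('n) * det A = 1 \<longrightarrow>
    (\<exists>\<mu>. (\<exists>v. v \<noteq> 0 \<and> A *v v = \<mu> *s v) \<and> cmod (c * \<mu>) \<noteq> 1))"
proof -
  have key: "(\<exists>lam v. v \<noteq> 0 \<and> (mat c ** A) *v v = lam *s v \<and> cmod lam \<noteq> 1) \<longleftrightarrow>
      (\<exists>\<mu>. (\<exists>v. v \<noteq> 0 \<and> A *v v = \<mu> *s v) \<and> cmod (c * \<mu>) \<noteq> 1)"
    if "c ^ CARD('n) * det A = 1" for c
  proof -
    have "c \<noteq> 0" using that by (auto simp: power_0_left)
    have eq: "(mat c ** A) *v v = c *s (A *v v)" for v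
      by (simp add: matrix_vector_mul_assoc[symmetric] matrix_vector_mul_mat)
    show ?thesis
    proof
      assume "\<exists>lam v. v \<noteq> 0 \<and> (mat c ** A) *v v = lam *s v \<and> cmod lam \<noteq> 1"
      then obtain lam v where "v \<noteq> 0" "c *s (A *v v) = lam *s v" "cmod lam \<noteq> 1"
        unfolding eq by blast
      moreover from this have "A *v v = (lam / c) *s v"
      proof -
        have "A *v v = (1 / c) *s (c *s (A *v v))" using \<open>c \<noteq> 0\<close> by (simp add: vector_smult_assoc)
        also have "\<dots> = (lam / c) *s v"
          using \<open>c *s (A *v v) = lam *s v\<close> by (simp add: vector_smult_assoc)
        finally show ?thesis .
      qed
      ultimately show "\<exists>\<mu>. (\<exists>v. v \<noteq> 0 \<and> A *v v = \<mu> *s v) \<and> cmod (c * \<mu>) \<noteq> 1"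
        using \<open>c \<noteq> 0\<close> by (intro exI[of _ "lam / c"]) auto
    next
      assume "\<exists>\<mu>. (\<exists>v. v \<noteq> 0 \<and> A *v v = \<mu> *s v) \<and> cmod (c * \<mu>) \<noteq> 1"
      then obtain \<mu> v where "v \<noteq> 0" "A *v v = \<mu> *s v" "cmod (c * \<mu>) \<noteq> 1" by blast
      then show "\<exists>lam v. v \<noteq> 0 \<and> (mat c ** A) *v v = lam *s v \<and> cmod lam \<noteq> 1"
        unfolding eq by (intro exI[of _ "c * \<mu>"] exI[of _ v]) (simp add: vector_smult_assoc)
    qed
  qed
  have "det (mat c ** A) = c ^ CARD('n) * det A" for c by (simp add: det_mul det_mat)
  then show ?thesis unfolding loxodromic_def using key by simp
qed

lemma conj_eigenvector_iff:
  fixes M P P' :: "complex^'n^'n"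
  assumes inv: "P ** P' = mat 1" "P' ** P = mat 1"
  shows "(\<exists>v. v \<noteq> 0 \<and> (P' ** M ** P) *v v = \<mu> *s v) \<longleftrightarrow> (\<exists>w. w \<noteq> 0 \<and> M *v w = \<mu> *s w)"
proof
  assume "\<exists>v. v \<noteq> 0 \<and> (P' ** M ** P) *v v = \<mu> *s v"
  then obtain v where v: "v \<noteq> 0" "(P' ** M ** P) *v v = \<mu> *s v" by blast
  then have "P *v ((P' ** M ** P) *v v) = \<mu> *s (P *v v)" by (simp add: vector_scalar_commute)
  then have "M *v (P *v v) = \<mu> *s (P *v v)"
    by (simp add: matrix_vector_mul_assoc matrix_mul_assoc inv(1))
  moreover have "P *v v \<noteq> 0" using v(1) left_inverse_mult_eq_0_iff[OF inv(2)] by simp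
  ultimately show "\<exists>w. w \<noteq> 0 \<and> M *v w = \<mu> *s w" by blast
next
  assume "\<exists>w. w \<noteq> 0 \<and> M *v w = \<mu> *s w"
  then obtain w where w: "w \<noteq> 0" "M *v w = \<mu> *s w" by blast
  have "(P' ** M ** P) *v (P' *v w) = P' *v (M *v w)"
    by (simp add: matrix_vector_mul_assoc matrix_mul_assoc[symmetric] inv(1))
  then have "(P' ** M ** P) *v (P' *v w) = \<mu> *s (P' *v w)"
    using w(2) by (simp add: vector_scalar_commute)
  moreover have "P' *v w \<noteq> 0" using w(1) left_inverse_mult_eq_0_iff[OF inv(1)] by simp
  ultimately show "\<exists>v. v \<noteq> 0 \<and> (P' ** M ** P) *v v = \<mu> *s v" by blast
qed

lemma det_conj:
  fixes M P P' :: "'a::comm_ring_1^'n::finite^'n"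
  assumes "P' ** P = mat 1"
  shows "det (P' ** M ** P) = det M"
proof -
  have "det P' * det P = 1" using assms by (metis det_I det_mul)
  moreover have "det (P' ** M ** P) = (det P' * det P) * det M" by (simp add: det_mul ac_simps)
  ultimately show ?thesis by simp
qed

lemma loxodromic_conj:
  fixes T P P' :: "complex^'n^'n"
  assumes inv: "P ** P' = mat 1" "P' ** P = mat 1"
  shows "loxodromic (P' ** T ** P) \<longleftrightarrow> loxodromic T"
  unfolding loxodromic_iff_eigenvalues conj_eigenvector_iff[OF inv] det_conj[OF inv(2)] ..

lemma ex_power_mult_eq_1:
  assumes "z \<noteq> 0" and "n > 0"
  shows "\<exists>c. c ^ n * z = (1 :: complex)"
proof -
  have "exp (- Ln z / of_nat n) ^ n = exp (- Ln z)"
    using \<open>n > 0\<close> by (simp flip: exp_of_nat_mult)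
  then show ?thesis using \<open>z \<noteq> 0\<close> by (intro exI[of _ "exp (- Ln z / of_nat n)"]) (simp add: exp_minus)
qed

lemma loxodromic_triangular_wrt_iff:
  fixes T :: "complex^'n::finite^'n"
  assumes "inj r" and "triangular_wrt r T"
  shows "loxodromic T \<longleftrightarrow> (\<forall>c. c ^ CARD('n) * det T = 1 \<longrightarrow> (\<exists>i. cmod (c * T$i$i) \<noteq> 1))"
  unfolding loxodromic_iff_eigenvalues triangular_wrt_has_eigenvalue_iff[OF assms] by blast

lemma loxodromic_triangular_iff:
  fixes T :: "complex^'n::finite^'n"
  assumes "inj r" and tri: "triangular_wrt r T" and "invertible T"
  shows "loxodromic T \<longleftrightarrow> (\<exists>i j. cmod (T$i$i) \<noteq> cmod (T$j$j))"
proof -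
  have "det T \<noteq> 0" using \<open>invertible T\<close> by (simp add: invertible_det_nz)
  note lox = loxodromic_triangular_wrt_iff[OF assms(1,2)]
  have norm_prod: "cmod (c ^ CARD('n) * det T) = (\<Prod>i\<in>UNIV. cmod (c * T$i$i))" for c
    unfolding det_triangular_wrt[OF assms(1,2)] by (simp add: norm_mult norm_power prod_norm prod.distrib)
  show ?thesis
  proof
    assume "loxodromic T"
    show "\<exists>i j. cmod (T$i$i) \<noteq> cmod (T$j$j)"
    proof (rule ccontr)
      assume equal: "\<not> ?thesis"
      define \<rho> where "\<rho> = cmod (T$undefined$undefined)"
      have \<rho>: "cmod (T$i$i) = \<rho>" for i using equal unfolding \<rho>_def by blast
      obtain c where c: "c ^ CARD('n) * det T = 1"
        using ex_power_mult_eq_1[OF \<open>det T \<noteq> 0\<close> zero_less_card_finite] by blast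
      then have "(cmod c * \<rho>) ^ CARD('n) = 1 ^ CARD('n)"
        using norm_prod[of c] \<rho> by (simp add: norm_mult)
      moreover have "0 \<le> \<rho>" unfolding \<rho>_def by simp
      ultimately have "cmod c * \<rho> = 1"
        using power_eq_imp_eq_base[of "cmod c * \<rho>" "CARD('n)" 1] by simp
      moreover obtain i where "cmod (c * T$i$i) \<noteq> 1"
        using lox[THEN iffD1, rule_format, OF \<open>loxodromic T\<close> c] by blast
      moreover have "cmod (c * T$i$i) = cmod c * \<rho>" by (simp add: norm_mult \<rho>)
      ultimately show False by simp
    qed
  next
    assume "\<exists>i j. cmod (T$i$i) \<noteq> cmod (T$j$j)"
    then obtain i j where ij: "cmod (T$i$i) \<noteq> cmod (T$j$j)" by blast
    show "loxodromic T" unfolding lox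
    proof (intro allI impI)
      fix c :: complex assume c: "c ^ CARD('n) * det T = 1"
      then have "c \<noteq> 0" by (auto simp: power_0_left)
      show "\<exists>i. cmod (c * T$i$i) \<noteq> 1"
      proof (rule ccontr)
        assume "\<not> ?thesis"
        then have "cmod c * cmod (T$i$i) = cmod c * cmod (T$j$j)" by (simp add: norm_mult)
        then show False using ij \<open>c \<noteq> 0\<close> by simp
      qed
    qed
  qed
qed

section \<open>Attracting sets of triangular matrices with unequal moduli\<close>

definition mass :: "'n set \<Rightarrow> complex^'n \<Rightarrow> real" where
  "mass L y = (\<Sum>i\<in>L. cmod (y$i))"

lemma mass_nonneg: "0 \<le> mass L y"
  unfolding mass_def by (simp add: sum_nonneg)

lemma mass_smult: "mass L (c *s y) = cmod c * mass L y"
  unfolding mass_def by (simp add: norm_mult sum_distrib_left)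

lemma mass_split: "mass UNIV y = mass L y + mass (-L) (y :: complex^'n::finite)"
  unfolding mass_def using sum.union_disjoint[of L "-L" "\<lambda>i. cmod (y$i)"]
  by (simp add: Un_commute)

lemma mass_axis: "mass L (axis i 1 :: complex^'n::finite) = (if i \<in> L then 1 else 0)"
proof -
  have "mass L (axis i 1 :: complex^'n) = (\<Sum>k\<in>L. if k = i then 1 else 0)"
    unfolding mass_def by (rule sum.cong) (auto simp: axis_def)
  then show ?thesis by simp
qed

lemma continuous_mass: "continuous_on UNIV (mass L :: complex^'n::finite \<Rightarrow> real)"
  unfolding mass_def by (intro continuous_intros)

lemma matrix_vector_row_split:
  "(T *v y)$i = T$i$i * y$i + (\<Sum>j\<in>UNIV-{i}. T$i$j * y$j)"
  unfolding matrix_vector_mult_def by (simp add: sum.remove)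

lemma offdiag_row_bound:
  fixes T :: "complex^'n::finite^'n"
  assumes off: "\<And>j. j \<noteq> i \<Longrightarrow> cmod (T$i$j) \<le> \<eta>" and "0 \<le> \<eta>"
    and zero: "\<And>j. j \<notin> J \<Longrightarrow> T$i$j = 0"
  shows "cmod (\<Sum>j\<in>UNIV-{i}. T$i$j * y$j) \<le> \<eta> * mass J y"
proof -
  have "cmod (\<Sum>j\<in>UNIV-{i}. T$i$j * y$j) \<le> (\<Sum>j\<in>UNIV-{i}. cmod (T$i$j * y$j))"
    by (rule norm_sum)
  also have "\<dots> \<le> (\<Sum>j\<in>UNIV-{i}. if j \<in> J then \<eta> * cmod (y$j) else 0)"
    using off zero by (intro sum_mono) (simp add: norm_mult mult_right_mono)
  also have "\<dots> \<le> (\<Sum>j\<in>UNIV. if j \<in> J then \<eta> * cmod (y$j) else 0)"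
    using \<open>0 \<le> \<eta>\<close> by (intro sum_mono2) simp_all
  also have "\<dots> = \<eta> * mass J y"
    unfolding mass_def by (simp add: sum.If_cases sum_distrib_left)
  finally show ?thesis .
qed

lemma mass_UNIV_pos:
  assumes "y \<noteq> 0"
  shows "0 < mass UNIV (y :: complex^'n::finite)"
proof (rule ccontr)
  assume "\<not> 0 < mass UNIV y"
  then have "mass UNIV y = 0" using mass_nonneg[of UNIV y] by simp
  then have "y = 0"
    unfolding mass_def by (simp add: sum_nonneg_eq_0_iff Finite_Cartesian_Product.vec_eq_iff)
  with assms show False ..
qed

lemma row_bound_above:
  fixes T :: "complex^'n::finite^'n"
  assumes "cmod (T$i$i) \<le> s" and "\<And>j. j \<noteq> i \<Longrightarrow> cmod (T$i$j) \<le> \<eta>" and "0 \<le> \<eta>"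
    and "\<And>j. j \<notin> J \<Longrightarrow> T$i$j = 0"
  shows "cmod ((T *v y)$i) \<le> s * cmod (y$i) + \<eta> * mass J y"
proof -
  have "cmod (\<Sum>j\<in>UNIV-{i}. T$i$j * y$j) \<le> \<eta> * mass J y"
    using assms(2-4) by (rule offdiag_row_bound)
  moreover have "cmod (T$i$i * y$i) \<le> s * cmod (y$i)"
    using assms(1) by (simp add: norm_mult mult_right_mono)
  moreover have "cmod ((T *v y)$i) \<le> cmod (T$i$i * y$i) + cmod (\<Sum>j\<in>UNIV-{i}. T$i$j * y$j)"
    unfolding matrix_vector_row_split by (rule norm_triangle_ineq)
  ultimately show ?thesis by linarith
qed

lemma row_bound_below:
  fixes T :: "complex^'n::finite^'n"
  assumes "t \<le> cmod (T$i$i)" and "\<And>j. j \<noteq> i \<Longrightarrow> cmod (T$i$j) \<le> \<eta>" and "0 \<le> \<eta>"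
  shows "t * cmod (y$i) - \<eta> * mass UNIV y \<le> cmod ((T *v y)$i)"
proof -
  have "cmod (\<Sum>j\<in>UNIV-{i}. T$i$j * y$j) \<le> \<eta> * mass UNIV y"
    using assms(2,3) by (rule offdiag_row_bound[where J = UNIV]) auto
  moreover have "t * cmod (y$i) \<le> cmod (T$i$i * y$i)"
    using assms(1) by (simp add: norm_mult mult_right_mono)
  moreover note norm_diff_ineq[of "T$i$i * y$i" "\<Sum>j\<in>UNIV-{i}. T$i$j * y$j"]
  ultimately show ?thesis unfolding matrix_vector_row_split by linarith
qed

lemma mass_image_outside:
  fixes T :: "complex^'n::finite^'n" and L :: "'n set"
  assumes small: "\<And>i. i \<notin> L \<Longrightarrow> cmod (T$i$i) \<le> s"
    and off: "\<And>i j. i \<noteq> j \<Longrightarrow> cmod (T$i$j) \<le> \<eta>" and "0 \<le> \<eta>"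
    and blk: "\<And>i j. i \<notin> L \<Longrightarrow> j \<in> L \<Longrightarrow> T$i$j = 0"
  shows "mass (-L) (T *v y) \<le> s * mass (-L) y + real CARD('n) * \<eta> * mass (-L) y"
proof -
  have "cmod ((T *v y)$i) \<le> s * cmod (y$i) + \<eta> * mass (-L) y" if "i \<notin> L" for i
    by (intro row_bound_above) (use small[OF that] off blk[OF that] \<open>0 \<le> \<eta>\<close> in auto)
  then have "mass (-L) (T *v y) \<le> (\<Sum>i\<in>-L. s * cmod (y$i) + \<eta> * mass (-L) y)"
    unfolding mass_def by (intro sum_mono) simp
  also have "\<dots> = s * mass (-L) y + real (card (-L)) * \<eta> * mass (-L) y"
    unfolding mass_def by (simp add: sum.distrib sum_distrib_left mult.assoc)
  also have "\<dots> \<le> s * mass (-L) y + real CARD('n) * \<eta> * mass (-L) y"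
    using \<open>0 \<le> \<eta>\<close> mass_nonneg[of "-L" y]
    by (intro add_left_mono mult_right_mono) (simp_all add: card_mono)
  finally show ?thesis .
qed

lemma mass_image_inside:
  fixes T :: "complex^'n::finite^'n" and L :: "'n set"
  assumes big: "\<And>i. i \<in> L \<Longrightarrow> t \<le> cmod (T$i$i)"
    and off: "\<And>i j. i \<noteq> j \<Longrightarrow> cmod (T$i$j) \<le> \<eta>" and "0 \<le> \<eta>"
  shows "t * mass L y - real CARD('n) * \<eta> * mass UNIV y \<le> mass L (T *v y)"
proof -
  have "t * mass L y - real CARD('n) * \<eta> * mass UNIV y
      \<le> t * mass L y - real (card L) * \<eta> * mass UNIV y"
    using \<open>0 \<le> \<eta>\<close> mass_nonneg[of UNIV y]
    by (intro diff_left_mono mult_right_mono) (simp_all add: card_mono)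
  also have "\<dots> = (\<Sum>i\<in>L. t * cmod (y$i) - \<eta> * mass UNIV y)"
    unfolding mass_def by (simp add: sum_subtractf sum_distrib_left mult.assoc)
  also have "\<dots> \<le> mass L (T *v y)"
  proof -
    have "t * cmod (y$i) - \<eta> * mass UNIV y \<le> cmod ((T *v y)$i)" if "i \<in> L" for i
      by (intro row_bound_below) (use big[OF that] off \<open>0 \<le> \<eta>\<close> in auto)
    then show ?thesis unfolding mass_def by (intro sum_mono) simp
  qed
  finally show ?thesis .
qed

lemma mass_dominance_strict:
  fixes T :: "complex^'n::finite^'n" and L :: "'n set"
  assumes big: "\<And>i. i \<in> L \<Longrightarrow> t \<le> cmod (T$i$i)"
    and small: "\<And>i. i \<notin> L \<Longrightarrow> cmod (T$i$i) \<le> s" and "0 \<le> s"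
    and off: "\<And>i j. i \<noteq> j \<Longrightarrow> cmod (T$i$j) \<le> \<eta>" and "0 \<le> \<eta>"
    and blk: "\<And>i j. i \<notin> L \<Longrightarrow> j \<in> L \<Longrightarrow> T$i$j = 0"
    and gap: "3 * real CARD('n) * \<eta> < t - s"
    and "y \<noteq> 0" and le: "mass (-L) y \<le> mass L y"
  shows "mass (-L) (T *v y) < mass L (T *v y)"
proof -
  define a where "a = mass L y"
  define b where "b = mass (-L) y"
  define N where "N = real CARD('n)"
  have "0 \<le> b" "b \<le> a" using le mass_nonneg unfolding a_def b_def by auto
  have "0 < a" using mass_UNIV_pos[OF \<open>y \<noteq> 0\<close>] mass_split[of y L] le unfolding a_def by simp
  have "0 \<le> N * \<eta>" unfolding N_def using \<open>0 \<le> \<eta>\<close> by simp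
  have "mass (-L) (T *v y) \<le> s * b + N * \<eta> * b"
    unfolding b_def N_def using small off \<open>0 \<le> \<eta>\<close> blk by (rule mass_image_outside)
  also have "\<dots> \<le> s * a + N * \<eta> * a"
    using \<open>0 \<le> s\<close> \<open>0 \<le> N * \<eta>\<close> \<open>b \<le> a\<close> by (intro add_mono mult_left_mono) simp_all
  also have "\<dots> < t * a - N * \<eta> * (a + a)"
  proof -
    have "s + 3 * N * \<eta> < t" using gap unfolding N_def by simp
    then have "(s + 3 * N * \<eta>) * a < t * a" using \<open>0 < a\<close> by (rule mult_strict_right_mono)
    then show ?thesis by (simp add: algebra_simps)
  qed
  also have "\<dots> \<le> t * a - N * \<eta> * (a + b)"
    using \<open>0 \<le> N * \<eta>\<close> \<open>b \<le> a\<close> by (intro diff_left_mono mult_left_mono) simp_all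
  also have "\<dots> \<le> mass L (T *v y)"
    unfolding a_def b_def N_def mass_split[of y L, symmetric] using big off \<open>0 \<le> \<eta>\<close>
    by (rule mass_image_inside)
  finally show ?thesis .
qed

definition diag_matrix :: "('n \<Rightarrow> 'a::zero) \<Rightarrow> 'a^'n^'n" where
  "diag_matrix f = (\<chi> i j. if i = j then f i else 0)"

lemma diag_matrix_mult_entry:
  fixes X :: "'a::comm_semiring_1^'n::finite^'n"
  shows "(diag_matrix f ** X ** diag_matrix g)$i$j = f i * X$i$j * g j"
proof -
  have "(diag_matrix f ** X)$i$k = f i * X$i$k" for k
  proof -
    have "(diag_matrix f ** X)$i$k = (\<Sum>l\<in>UNIV. (if i = l then f i else 0) * X$l$k)"
      by (simp add: matrix_matrix_mult_def diag_matrix_def)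
    also have "\<dots> = (\<Sum>l\<in>UNIV. if i = l then f i * X$l$k else 0)" by (rule sum.cong) auto
    finally show ?thesis by simp
  qed
  then have "(diag_matrix f ** X ** diag_matrix g)$i$j =
      (\<Sum>k\<in>UNIV. f i * X$i$k * (if k = j then g k else 0))"
    by (simp add: matrix_matrix_mult_def diag_matrix_def)
  also have "\<dots> = (\<Sum>k\<in>UNIV. if k = j then f i * X$i$k * g k else 0)" by (rule sum.cong) auto
  finally show ?thesis by simp
qed

lemma diag_matrix_mult:
  "diag_matrix f ** diag_matrix g = (diag_matrix (\<lambda>i. f i * g i) :: 'a::comm_semiring_1^'n::finite^'n)"
proof -
  have "(diag_matrix f ** diag_matrix g :: 'a^'n^'n)$i$j = (if i = j then f i * g i else 0)" for i j
  proof -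
    have "(diag_matrix f ** diag_matrix g :: 'a^'n^'n)$i$j
        = (\<Sum>k\<in>UNIV. (if i = k then f i else 0) * (if k = j then g k else 0))"
      by (simp add: matrix_matrix_mult_def diag_matrix_def)
    also have "\<dots> = (\<Sum>k\<in>UNIV. if k = i then (if i = j then f i * g i else 0) else 0)"
      by (rule sum.cong) auto
    finally show ?thesis by simp
  qed
  then show ?thesis by (simp add: Finite_Cartesian_Product.vec_eq_iff diag_matrix_def)
qed

lemma ex_entry_scaling_bound:
  fixes T :: "complex^'n::finite^'n"
  assumes "\<eta> > 0"
  shows "\<exists>\<delta>. 0 < \<delta> \<and> \<delta> \<le> 1 \<and> (\<forall>i j. cmod (T$i$j) * \<delta> \<le> \<eta>)"
proof -
  define Mx where "Mx = (\<Sum>i\<in>UNIV. \<Sum>j\<in>UNIV. cmod (T$i$j))"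
  have Mx: "cmod (T$i$j) \<le> Mx" for i j
  proof -
    have "cmod (T$i$j) \<le> (\<Sum>j\<in>UNIV. cmod (T$i$j))" by (rule member_le_sum) simp_all
    also have "\<dots> \<le> Mx" unfolding Mx_def by (rule member_le_sum) (simp_all add: sum_nonneg)
    finally show ?thesis .
  qed
  have "0 \<le> Mx" unfolding Mx_def by (simp add: sum_nonneg)
  define \<delta> where "\<delta> = min 1 (\<eta> / (Mx + 1))"
  have "0 < \<delta>" "\<delta> \<le> 1" unfolding \<delta>_def using \<open>\<eta> > 0\<close> \<open>0 \<le> Mx\<close> by simp_all
  have "cmod (T$i$j) * \<delta> \<le> \<eta>" for i j
  proof -
    have "cmod (T$i$j) * \<delta> \<le> Mx * (\<eta> / (Mx + 1))"
      unfolding \<delta>_def using Mx[of i j] \<open>0 \<le> Mx\<close> \<open>\<eta> > 0\<close> by (intro mult_mono) simp_all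
    also have "\<dots> \<le> \<eta>" using \<open>0 \<le> Mx\<close> \<open>\<eta> > 0\<close> by (simp add: field_simps)
    finally show ?thesis .
  qed
  then show ?thesis using \<open>0 < \<delta>\<close> \<open>\<delta> \<le> 1\<close> by blast
qed

lemma diagonal_conj_small_offdiag:
  fixes T :: "complex^'n::finite^'n"
  assumes "inj r" and tri: "triangular_wrt r T" and "\<eta> > 0"
  obtains S S' :: "complex^'n^'n" where "S ** S' = mat 1" "S' ** S = mat 1"
    "\<And>i. (S ** T ** S')$i$i = T$i$i" "\<And>i j. T$i$j = 0 \<Longrightarrow> (S ** T ** S')$i$j = 0"
    "\<And>i j. i \<noteq> j \<Longrightarrow> cmod ((S ** T ** S')$i$j) \<le> \<eta>"
proof -
  obtain \<delta> where "0 < \<delta>" "\<delta> \<le> 1" and small: "\<And>i j. cmod (T$i$j) * \<delta> \<le> \<eta>"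
    using ex_entry_scaling_bound[OF \<open>\<eta> > 0\<close>] by blast
  \<comment> \<open>conjugation multiplies the entry \<open>(i, j)\<close> by \<open>\<delta> ^ (r j - r i)\<close>\<close>
  define f where "f i = (of_real ((1 / \<delta>) ^ r i) :: complex)" for i
  define g where "g i = (of_real (\<delta> ^ r i) :: complex)" for i
  have fg: "f i * g i = 1" "g i * f i = 1" for i
    unfolding f_def g_def using \<open>0 < \<delta>\<close> by (simp_all add: power_one_over field_simps flip: of_real_mult)
  let ?T' = "diag_matrix f ** T ** diag_matrix g"
  have entry: "?T'$i$j = T$i$j * (f i * g j)" for i j
    by (simp add: diag_matrix_mult_entry ac_simps)
  show ?thesis
  proof
    show "diag_matrix f ** diag_matrix g = mat 1" "diag_matrix g ** diag_matrix f = mat 1"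
      unfolding diag_matrix_mult fg by (simp_all add: diag_matrix_def Finite_Cartesian_Product.mat_def)
    show "?T'$i$i = T$i$i" for i unfolding entry fg by simp
    show "?T'$i$j = 0" if "T$i$j = 0" for i j unfolding entry that by simp
    show "cmod (?T'$i$j) \<le> \<eta>" if "i \<noteq> j" for i j
    proof (cases "r j < r i")
      case True
      then show ?thesis using tri \<open>\<eta> > 0\<close> unfolding entry triangular_wrt_def by simp
    next
      case False
      moreover have "r i \<noteq> r j" using \<open>i \<noteq> j\<close> \<open>inj r\<close> by (simp add: inj_eq)
      ultimately have "r i < r j" by simp
      then obtain m where m: "r j = r i + Suc m" using less_iff_Suc_add by auto
      have r: "(1 / \<delta>) ^ r i * \<delta> ^ (r i + Suc m) = \<delta> ^ Suc m"
        using \<open>0 < \<delta>\<close> by (simp add: power_add power_one_over)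
      have "f i * g j = of_real ((1 / \<delta>) ^ r i * \<delta> ^ (r i + Suc m))"
        unfolding f_def g_def m by (simp only: of_real_mult)
      then have "f i * g j = of_real (\<delta> ^ Suc m)" unfolding r .
      then have "cmod (?T'$i$j) = cmod (T$i$j) * \<delta> ^ Suc m"
        unfolding entry using \<open>0 < \<delta>\<close> by (simp add: norm_mult norm_power)
      also have "\<dots> \<le> cmod (T$i$j) * \<delta>"
        using \<open>0 < \<delta>\<close> \<open>\<delta> \<le> 1\<close> by (intro mult_left_mono) (simp_all add: power_le_one mult_left_le)
      finally show ?thesis using small[of i j] by simp
    qed
  qed
qed

lemma attracting_set_of_mass_dominance:
  fixes M :: "complex^'n::finite^'n" and L :: "'n set"
  assumes "L \<noteq> {}" and "L \<noteq> UNIV"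
    and dom: "\<And>y. y \<noteq> 0 \<Longrightarrow> mass (-L) y \<le> mass L y \<Longrightarrow> mass (-L) (M *v y) < mass L (M *v y)"
  shows "attracting_set M (proj_set (\<lambda>v. mass (-L) v < mass L v))"
proof -
  obtain i j where "i \<in> L" "j \<notin> L" using assms(1,2) by blast
  let ?Q = "\<lambda>v. mass (-L) v < mass L v" and ?Q' = "\<lambda>v. mass (-L) v \<le> mass L v"
  let ?W = "proj_set ?Q"
  have inv: "scale_invariant ?Q" "scale_invariant ?Q'"
    unfolding scale_invariant_def by (simp_all add: mass_smult)
  have "open {v. v \<noteq> 0 \<and> ?Q v}" "open {v. v \<noteq> 0 \<and> \<not> ?Q' v}"
    by (auto intro!: open_Int open_Collect_less continuous_mass simp: Collect_conj_eq
        open_Collect_neq not_le)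
  then have oW: "openin proj_top ?W" and cl: "closedin proj_top (proj_set ?Q')"
    using inv by (simp_all add: openin_proj_set closedin_proj_set)
  have "pline (axis i 1) \<in> ?W" "pline (axis j 1) \<notin> ?W"
    using \<open>i \<in> L\<close> \<open>j \<notin> L\<close> by (simp_all add: pline_in_proj_set[OF inv(1)] mass_axis)
  moreover have "pline (axis j 1) \<in> topspace proj_top"
    unfolding topspace_proj_top by (simp add: pline_in_proj_space)
  moreover have "proj_top closure_of ?W \<subseteq> proj_set ?Q'"
    by (rule closure_of_minimal[OF _ cl]) (auto simp: proj_set_def)
  moreover have "proj_map M ` proj_set ?Q' \<subseteq> ?W"
  proof
    fix x assume "x \<in> proj_map M ` proj_set ?Q'"
    then obtain v where v: "v \<noteq> 0" "?Q' v" "x = pline (M *v v)"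
      unfolding proj_set_def by (auto simp: proj_map_pline)
    then have "?Q (M *v v)" using dom by blast
    moreover from this have "M *v v \<noteq> 0" by (auto simp: mass_def)
    ultimately show "x \<in> ?W" unfolding v(3) by (simp add: pline_in_proj_set[OF inv(1)])
  qed
  ultimately show ?thesis
    unfolding attracting_set_def using oW openin_subset[OF oW] by blast
qed

lemma triangular_wrt_modulus_gap:
  fixes T :: "complex^'n::finite^'n"
  assumes tri: "triangular_wrt r T"
    and sorted: "\<And>i j. r i \<le> r j \<Longrightarrow> cmod (T$j$j) \<le> cmod (T$i$i)"
    and differ: "cmod (T$i$i) \<noteq> cmod (T$j$j)"
  obtains L :: "'n set" and s t :: real where "L \<noteq> {}" "L \<noteq> UNIV" "0 \<le> s" "s < t"
    "\<And>i. i \<in> L \<Longrightarrow> t \<le> cmod (T$i$i)" "\<And>i. i \<notin> L \<Longrightarrow> cmod (T$i$i) \<le> s"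
    "\<And>i j. i \<notin> L \<Longrightarrow> j \<in> L \<Longrightarrow> T$i$j = 0"
proof -
  define d where "d i = cmod (T$i$i)" for i
  define s where "s = Min (range d)"
  define L where "L = {i. s < d i}"
  have s_le: "s \<le> d i" for i unfolding s_def by simp
  have "s \<in> range d" unfolding s_def by (intro Min_in) simp_all
  then obtain i0 where "d i0 = s" by auto
  then have "L \<noteq> UNIV" "0 \<le> s" unfolding L_def d_def by auto
  have "i \<in> L \<or> j \<in> L" using differ s_le[of i] s_le[of j] unfolding L_def d_def by force
  then have "L \<noteq> {}" by blast
  define t where "t = Min (d ` L)"
  have t_le: "t \<le> d i" if "i \<in> L" for i unfolding t_def using that by simp
  have "t \<in> d ` L" unfolding t_def using \<open>L \<noteq> {}\<close> by (intro Min_in) auto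
  then have "s < t" unfolding L_def by auto
  have blk: "T$i$j = 0" if "i \<notin> L" "j \<in> L" for i j
  proof -
    have "\<not> r i \<le> r j" using sorted[of i j] that s_le[of i] unfolding L_def d_def by force
    then show ?thesis using tri unfolding triangular_wrt_def by simp
  qed
  show thesis
  proof (rule that[OF \<open>L \<noteq> {}\<close> \<open>L \<noteq> UNIV\<close> \<open>0 \<le> s\<close> \<open>s < t\<close> _ _ blk])
    show "t \<le> cmod (T$i$i)" if "i \<in> L" for i using t_le[OF that] unfolding d_def .
    show "cmod (T$i$i) \<le> s" if "i \<notin> L" for i using that s_le[of i] unfolding L_def d_def by simp
  qed
qed

lemma attracting_set_if_moduli_differ:
  fixes T :: "complex^'n::finite^'n"
  assumes "inj r" and tri: "triangular_wrt r T"
    and sorted: "\<And>i j. r i \<le> r j \<Longrightarrow> cmod (T$j$j) \<le> cmod (T$i$i)"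
    and differ: "cmod (T$i$i) \<noteq> cmod (T$j$j)"
  shows "\<exists>W. attracting_set T W"
proof -
  obtain L s t where L: "L \<noteq> {}" "L \<noteq> UNIV" and "0 \<le> s" "s < t"
    and big: "\<And>i. i \<in> L \<Longrightarrow> t \<le> cmod (T$i$i)" and small: "\<And>i. i \<notin> L \<Longrightarrow> cmod (T$i$i) \<le> s"
    and blk: "\<And>i j. i \<notin> L \<Longrightarrow> j \<in> L \<Longrightarrow> T$i$j = 0"
    using triangular_wrt_modulus_gap[OF tri sorted differ] by blast
  define \<eta> where "\<eta> = (t - s) / (6 * real CARD('n))"
  have "\<eta> > 0" unfolding \<eta>_def using \<open>s < t\<close> by simp
  have gap: "3 * real CARD('n) * \<eta> < t - s" unfolding \<eta>_def using \<open>s < t\<close> by (simp add: field_simps)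
  obtain S S' :: "complex^'n^'n" where inv: "S ** S' = mat 1" "S' ** S = mat 1"
    and diag: "\<And>i. (S ** T ** S')$i$i = T$i$i"
    and zero: "\<And>i j. T$i$j = 0 \<Longrightarrow> (S ** T ** S')$i$j = 0"
    and off: "\<And>i j. i \<noteq> j \<Longrightarrow> cmod ((S ** T ** S')$i$j) \<le> \<eta>"
    using diagonal_conj_small_offdiag[OF \<open>inj r\<close> tri \<open>\<eta> > 0\<close>] by blast
  have "mass (-L) ((S ** T ** S') *v y) < mass L ((S ** T ** S') *v y)"
    if "y \<noteq> 0" "mass (-L) y \<le> mass L y" for y
    by (rule mass_dominance_strict[where s = s and t = t and \<eta> = \<eta>])
      (use big small diag \<open>0 \<le> s\<close> off \<open>\<eta> > 0\<close> blk zero gap that in auto)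
  then have "attracting_set (S ** T ** S') (proj_set (\<lambda>v. mass (-L) v < mass L v))"
    by (rule attracting_set_of_mass_dominance[OF L])
  then have "attracting_set (S' ** (S ** T ** S') ** S)
      (proj_map S' ` proj_set (\<lambda>v. mass (-L) v < mass L v))"
    using inv by (intro attracting_set_conj) auto
  moreover have "S' ** (S ** T ** S') ** S = (S' ** S) ** T ** (S' ** S)"
    by (simp add: matrix_mul_assoc)
  then have "S' ** (S ** T ** S') ** S = T" by (simp add: inv(2))
  ultimately show ?thesis by auto
qed

section \<open>No attracting set when all moduli are equal\<close>

lemma norm_increase_nearby:
  fixes z z0 :: complex
  assumes "e > 0"
  shows "\<exists>z'. dist z' z < e \<and> cmod (z - z0) < cmod (z' - z0)"
proof (cases "z = z0")
  case True
  then show ?thesis using assms by (intro exI[of _ "z + of_real (e / 2)"]) (simp add: dist_norm)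
next
  case False
  let ?d = "cmod (z - z0)" and ?z' = "z + (z - z0) * of_real (e / (2 * cmod (z - z0)))"
  have "?d > 0" using False by simp
  have "?z' - z0 = (z - z0) * of_real (1 + e / (2 * ?d))" by (simp add: algebra_simps)
  then have "cmod (?z' - z0) = ?d * \<bar>1 + e / (2 * ?d)\<bar>" by (simp only: norm_mult norm_of_real)
  also have "\<dots> = ?d + e / 2" using \<open>?d > 0\<close> \<open>e > 0\<close> by (simp add: field_simps)
  finally have "cmod (?z' - z0) = ?d + e / 2" .
  moreover have "dist ?z' z = ?d * \<bar>e / (2 * ?d)\<bar>"
    by (simp only: dist_norm add_diff_cancel_left' norm_mult norm_of_real)
  then have "dist ?z' z = e / 2" using \<open>?d > 0\<close> \<open>e > 0\<close> by simp
  ultimately show ?thesis using \<open>e > 0\<close> by (intro exI[of _ ?z']) simp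
qed

lemma re_cnj_mult_self: "Re (cnj w * w) = (cmod w)\<^sup>2"
  using cmod_power2[of w] by (simp add: power2_eq_square)

lemma re_cnj_increase_nearby:
  fixes z \<gamma> :: complex
  assumes "\<gamma> \<noteq> 0" and "e > 0"
  shows "\<exists>z'. dist z' z < e \<and> Re (cnj \<gamma> * z) < Re (cnj \<gamma> * z')"
proof -
  let ?z' = "z + of_real (e / (2 * cmod \<gamma>)) * \<gamma>"
  have "cnj \<gamma> * ?z' = cnj \<gamma> * z + of_real (e / (2 * cmod \<gamma>)) * (cnj \<gamma> * \<gamma>)"
    by (simp add: algebra_simps)
  then have "Re (cnj \<gamma> * ?z') = Re (cnj \<gamma> * z) + e / (2 * cmod \<gamma>) * (cmod \<gamma>)\<^sup>2"
    using re_cnj_mult_self[of \<gamma>] by simp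
  moreover have "dist ?z' z = \<bar>e / (2 * cmod \<gamma>)\<bar> * cmod \<gamma>"
    by (simp only: dist_norm add_diff_cancel_left' norm_mult norm_of_real)
  then have "dist ?z' z = e / 2" using assms by simp
  ultimately show ?thesis using assms by (intro exI[of _ ?z']) simp
qed

lemma affine_map_potential:
  fixes \<alpha> \<beta> :: complex
  assumes "cmod \<alpha> = 1"
  obtains \<phi> :: "complex \<Rightarrow> real" and c :: real
  where "continuous_on UNIV \<phi>" "c \<ge> 0" "\<And>z. \<phi> (\<alpha> * z + \<beta>) = \<phi> z + c"
    "\<And>z e. e > 0 \<Longrightarrow> \<exists>z'. dist z' z < e \<and> \<phi> z < \<phi> z'"
proof (cases "\<alpha> = 1")
  case False
  \<comment> \<open>a rotation about its fixed point \<open>z0\<close> preserves the distance to \<open>z0\<close>\<close>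
  define z0 where "z0 = \<beta> / (1 - \<alpha>)"
  have "\<alpha> * z0 + \<beta> = z0" using False unfolding z0_def by (simp add: field_simps)
  then have "\<alpha> * z + \<beta> - z0 = \<alpha> * (z - z0)" for z by (simp add: algebra_simps)
  then have "cmod (\<alpha> * z + \<beta> - z0) = cmod (z - z0) + 0" for z
    using assms by (simp add: norm_mult)
  with norm_increase_nearby show ?thesis
    by (intro that[of "\<lambda>z. cmod (z - z0)" 0]) (auto intro!: continuous_intros)
next
  case True
  \<comment> \<open>a translation by \<open>\<beta>\<close> moves the component along \<open>\<gamma>\<close> by \<open>Re (cnj \<gamma> * \<beta>) \<ge> 0\<close>\<close>
  define \<gamma> where "\<gamma> = (if \<beta> = 0 then 1 else \<beta>)"
  have "\<gamma> \<noteq> 0" unfolding \<gamma>_def by simp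
  have "Re (cnj \<gamma> * \<beta>) \<ge> 0" unfolding \<gamma>_def by (simp add: re_cnj_mult_self)
  with True re_cnj_increase_nearby[OF \<open>\<gamma> \<noteq> 0\<close>] show ?thesis
    by (intro that[of "\<lambda>z. Re (cnj \<gamma> * z)" "Re (cnj \<gamma> * \<beta>)"])
      (auto intro!: continuous_intros simp: algebra_simps)
qed

lemma norm_vector_smult: "norm (c *s x) = cmod c * norm (x :: complex^'n::finite)"
proof -
  have "norm (c *s x) = L2_set (\<lambda>i. cmod c * norm (x$i)) UNIV"
    unfolding norm_vec_def by (simp add: norm_mult)
  also have "\<dots> = cmod c * L2_set (\<lambda>i. norm (x$i)) UNIV"
    by (rule L2_set_right_distrib[symmetric]) simp
  finally show ?thesis unfolding norm_vec_def .
qed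

lemma norm_axis: "norm (axis i x :: 'a::real_normed_vector^'n::finite) = norm x"
proof -
  have "(\<Sum>j\<in>UNIV. (norm (axis i x $ j))\<^sup>2) = (\<Sum>j\<in>UNIV. if j = i then (norm x)\<^sup>2 else 0)"
    by (rule sum.cong) (auto simp: axis_def)
  then show ?thesis unfolding norm_vec_def L2_set_def by simp
qed

lemma ratio_smult: "c \<noteq> 0 \<Longrightarrow> (c *s y)$q / (c *s y)$p = y$q / (y$p :: complex)"
  by (cases "y$p = 0") simp_all

lemma ratio_axis_shift:
  fixes z :: "complex^'n::finite" and w :: complex
  assumes "p \<noteq> q" and "z$p \<noteq> 0"
  defines "z' \<equiv> z + axis q ((w - z$q / z$p) * z$p)"
  shows "z'$p = z$p" and "z'$q / z'$p = w" and "dist z' z = cmod (w - z$q / z$p) * cmod (z$p)"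
proof -
  show "z'$p = z$p" using assms(1) unfolding z'_def axis_def by simp
  then show "z'$q / z'$p = w" using assms(2) unfolding z'_def by (simp add: field_simps)
  show "dist z' z = cmod (w - z$q / z$p) * cmod (z$p)"
    unfolding z'_def dist_norm by (simp add: norm_axis norm_mult)
qed

lemma triangular_wrt_ratio_affine:
  fixes T :: "complex^'n::finite^'n"
  assumes tri: "triangular_wrt r T" and "inj r" and pq: "r p = Suc (r q)"
    and y: "y \<in> flag r (Suc (r p))" and "y$p \<noteq> 0" and "T$p$p \<noteq> 0"
  shows "(T *v y)$q / (T *v y)$p = (T$q$q / T$p$p) * (y$q / y$p) + T$q$p / T$p$p"
  using \<open>y$p \<noteq> 0\<close> \<open>T$p$p \<noteq> 0\<close>
  unfolding triangular_wrt_coord_top[OF tri \<open>inj r\<close> y] triangular_wrt_coord_next[OF tri \<open>inj r\<close> pq y]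
  by (simp add: field_simps)

lemma ratio_potential_max:
  fixes F :: "(complex^'n::finite) set" and \<phi> :: "complex \<Rightarrow> real"
  assumes "closed (insert 0 F)" and "0 \<notin> F" and cone: "\<And>y c. y \<in> F \<Longrightarrow> c \<noteq> 0 \<Longrightarrow> c *s y \<in> F"
    and "continuous_on UNIV \<phi>" and nz: "\<And>y. y \<in> F \<Longrightarrow> y$p \<noteq> 0" and "F \<noteq> {}"
  obtains y0 where "y0 \<in> F" "\<And>w. w \<in> F \<Longrightarrow> \<phi> (w$q / w$p) \<le> \<phi> (y0$q / y0$p)"
proof -
  let ?g = "\<lambda>y. \<phi> (y$q / y$p)"
  define K where "K = insert 0 F \<inter> sphere 0 1"
  have K: "y \<in> K \<longleftrightarrow> y \<in> F \<and> norm y = 1" for y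
    using \<open>0 \<notin> F\<close> unfolding K_def by auto
  have "compact K" unfolding K_def using assms(1) by (intro closed_Int_compact) simp_all
  \<comment> \<open>the potential is constant on lines, so it suffices to maximise it over unit vectors\<close>
  have normalise: "\<exists>u\<in>K. ?g u = ?g w" if "w \<in> F" for w
  proof -
    have "w \<noteq> 0" using that \<open>0 \<notin> F\<close> by auto
    let ?c = "of_real (1 / norm w) :: complex"
    have "?c \<noteq> 0" using \<open>w \<noteq> 0\<close> by simp
    moreover have "norm (?c *s w) = 1" using \<open>w \<noteq> 0\<close> by (simp add: norm_vector_smult norm_divide)
    ultimately have "?c *s w \<in> K" using cone[OF that] unfolding K by simp
    moreover have "?g (?c *s w) = ?g w" using ratio_smult[OF \<open>?c \<noteq> 0\<close>] by simp
    ultimately show ?thesis by (rule bexI[rotated])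
  qed
  then have "K \<noteq> {}" using \<open>F \<noteq> {}\<close> by blast
  have "y$p \<noteq> 0" if "y \<in> K" for y using that nz unfolding K by simp
  then have "continuous_on K (\<lambda>y. y$q / y$p)"
    by (intro continuous_intros) simp_all
  with \<open>continuous_on UNIV \<phi>\<close> have "continuous_on K ?g"
    by (rule continuous_on_compose2) simp
  then obtain y0 where "y0 \<in> K" and max: "\<And>y. y \<in> K \<Longrightarrow> ?g y \<le> ?g y0"
    using continuous_attains_sup[OF \<open>compact K\<close> \<open>K \<noteq> {}\<close>] by blast
  show thesis
  proof
    show "y0 \<in> F" using \<open>y0 \<in> K\<close> K by blast
    show "?g w \<le> ?g y0" if "w \<in> F" for w using normalise[OF that] max by force
  qed
qed

lemma pline_in_proj_space_iff: "pline v \<in> proj_space \<longleftrightarrow> v \<noteq> 0"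
proof
  assume "pline v \<in> proj_space"
  then obtain u where "u \<noteq> 0" "pline v = pline u" unfolding proj_space_def by blast
  then show "v \<noteq> 0" using pline_self[of u] unfolding pline_def by auto
qed (rule pline_in_proj_space)

lemma attracting_set_cones:
  fixes T :: "complex^'n::finite^'n"
  assumes "attracting_set T W"
  shows "open (cone_over W)" and "closed (insert 0 (cone_over (proj_top closure_of W)))"
    and "cone_over W \<subseteq> cone_over (proj_top closure_of W)"
    and "\<And>y. y \<in> cone_over (proj_top closure_of W) \<Longrightarrow> T *v y \<in> cone_over W"
proof -
  have W: "openin proj_top W" "W \<subseteq> proj_space"
    and img: "proj_map T ` (proj_top closure_of W) \<subseteq> W"
    using assms unfolding attracting_set_def topspace_proj_top by auto
  show "open (cone_over W)" using W(1) unfolding openin_proj_top by simp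
  show "closed (insert 0 (cone_over (proj_top closure_of W)))"
    by (rule closed_cone_over) simp
  show "cone_over W \<subseteq> cone_over (proj_top closure_of W)"
    using closure_of_subset[of W proj_top] W(2) unfolding cone_over_def topspace_proj_top by auto
  fix y assume "y \<in> cone_over (proj_top closure_of W)"
  then have "pline (T *v y) \<in> W"
    using img unfolding cone_over_def by (force simp: proj_map_pline)
  moreover from this have "T *v y \<noteq> 0" using W(2) pline_in_proj_space_iff by blast
  ultimately show "T *v y \<in> cone_over W" unfolding cone_over_def by simp
qed

lemma flag_ratio_increase:
  fixes z :: "complex^'n::finite" and \<phi> :: "complex \<Rightarrow> real"
  assumes "open U" and "z \<in> U" and "z \<in> flag r k" and "r q < k" and "p \<noteq> q" and "z$p \<noteq> 0"
    and no_max: "\<And>z e. e > 0 \<Longrightarrow> \<exists>z'. dist z' z < e \<and> \<phi> z < \<phi> z'"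
  obtains z' where "z' \<in> U" and "z' \<in> flag r k" and "\<phi> (z$q / z$p) < \<phi> (z'$q / z'$p)"
proof -
  obtain \<epsilon> where "\<epsilon> > 0" "ball z \<epsilon> \<subseteq> U"
    using \<open>open U\<close> \<open>z \<in> U\<close> open_contains_ball by blast
  moreover have "0 < cmod (z$p) + 1" by (simp add: add_nonneg_pos)
  ultimately have "\<epsilon> / (cmod (z$p) + 1) > 0" by simp
  then obtain w where w: "dist w (z$q / z$p) < \<epsilon> / (cmod (z$p) + 1)" "\<phi> (z$q / z$p) < \<phi> w"
    using no_max[of "\<epsilon> / (cmod (z$p) + 1)" "z$q / z$p"] by blast
  define z' where "z' = z + axis q ((w - z$q / z$p) * z$p)"
  have shifted: "z'$q / z'$p = w" "dist z' z = cmod (w - z$q / z$p) * cmod (z$p)"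
    using ratio_axis_shift[OF \<open>p \<noteq> q\<close> \<open>z$p \<noteq> 0\<close>] unfolding z'_def by simp_all
  have "cmod (w - z$q / z$p) * cmod (z$p) \<le> \<epsilon> / (cmod (z$p) + 1) * cmod (z$p)"
    using w(1) by (intro mult_right_mono) (simp_all add: dist_norm)
  also have "\<dots> = \<epsilon> * (cmod (z$p) / (cmod (z$p) + 1))" by simp
  also have "\<dots> < \<epsilon> * 1"
    using \<open>\<epsilon> > 0\<close> \<open>0 < cmod (z$p) + 1\<close> by (intro mult_strict_left_mono) simp_all
  finally have "z' \<in> U" using \<open>ball z \<epsilon> \<subseteq> U\<close> shifted(2) by (auto simp: dist_commute)
  moreover have "axis q ((w - z$q / z$p) * z$p) \<in> flag r k"
    using \<open>r q < k\<close> by (simp add: flag_def axis_def)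
  then have "z' \<in> flag r k" unfolding z'_def using \<open>z \<in> flag r k\<close> by (rule flag_add[rotated])
  ultimately show thesis using that w(2) shifted(1) by simp
qed

lemma attracting_set_flag_step:
  fixes T :: "complex^'n::finite^'n"
  assumes "inj r" and tri: "triangular_wrt r T" and pq: "r p = Suc (r q)"
    and md: "cmod (T$q$q) = cmod (T$p$p)" and "T$p$p \<noteq> 0" and W: "attracting_set T W"
    and misses: "cone_over (proj_top closure_of W) \<inter> flag r (r p) = {}"
  shows "cone_over W \<inter> flag r (Suc (r p)) = {}"
proof (rule ccontr)
  assume hits: "cone_over W \<inter> flag r (Suc (r p)) \<noteq> {}"
  let ?U = "cone_over W" and ?F = "cone_over (proj_top closure_of W)" and ?V = "flag r (Suc (r p))"
  note cones = attracting_set_cones[OF W]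
  define \<alpha> where "\<alpha> = T$q$q / T$p$p"
  define \<beta> where "\<beta> = T$q$p / T$p$p"
  have "cmod \<alpha> = 1" unfolding \<alpha>_def using md \<open>T$p$p \<noteq> 0\<close> by (simp add: norm_divide)
  then obtain \<phi> :: "complex \<Rightarrow> real" and c :: real where "continuous_on UNIV \<phi>" "c \<ge> 0"
    and shift: "\<And>z. \<phi> (\<alpha> * z + \<beta>) = \<phi> z + c"
    and no_max: "\<And>z e. e > 0 \<Longrightarrow> \<exists>z'. dist z' z < e \<and> \<phi> z < \<phi> z'"
    by (rule affine_map_potential[where \<beta> = \<beta>]) blast
  \<comment> \<open>\<open>T\<close> acts on the ratio of the two top coordinates of \<open>?V\<close> by \<open>z \<mapsto> \<alpha> z + \<beta>\<close>\<close>
  let ?g = "\<lambda>y. \<phi> (y$q / y$p)"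
  have nz: "y$p \<noteq> 0" if "y \<in> ?F \<inter> ?V" for y
    using that misses flag_SucD[OF \<open>inj r\<close>, of y p] by blast
  have "insert 0 (?F \<inter> ?V) = insert 0 ?F \<inter> ?V" by (auto simp: flag_def)
  then have "closed (insert 0 (?F \<inter> ?V))" using closed_Int[OF cones(2) closed_flag] by simp
  moreover have "c' *s y \<in> ?F \<inter> ?V" if "y \<in> ?F \<inter> ?V" "c' \<noteq> 0" for y c'
    using that by (simp add: cone_over_smult flag_smult)
  moreover have "0 \<notin> ?F \<inter> ?V" unfolding cone_over_def by simp
  moreover have "?F \<inter> ?V \<noteq> {}" using hits cones(3) by blast
  ultimately obtain y0 where y0: "y0 \<in> ?F \<inter> ?V" and max: "\<And>w. w \<in> ?F \<inter> ?V \<Longrightarrow> ?g w \<le> ?g y0"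
    using ratio_potential_max[OF _ _ _ \<open>continuous_on UNIV \<phi>\<close> nz] by blast
  define z where "z = T *v y0"
  have "z \<in> ?U" unfolding z_def using cones(4) y0 by blast
  have "z \<in> ?V" unfolding z_def using triangular_wrt_flag[OF tri] y0 by blast
  have "z$p = T$p$p * y0$p"
    unfolding z_def using y0 by (intro triangular_wrt_coord_top[OF tri \<open>inj r\<close>]) simp
  then have "z$p \<noteq> 0" using nz[OF y0] \<open>T$p$p \<noteq> 0\<close> by simp
  have "z$q / z$p = \<alpha> * (y0$q / y0$p) + \<beta>"
    unfolding z_def \<alpha>_def \<beta>_def using y0 nz[OF y0] \<open>T$p$p \<noteq> 0\<close>
    by (intro triangular_wrt_ratio_affine[OF tri \<open>inj r\<close> pq]) simp_all
  then have "?g z = ?g y0 + c" using shift[of "y0$q / y0$p"] by (simp only:)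
  moreover have "r q < Suc (r p)" "p \<noteq> q" using pq by auto
  then obtain z' where "z' \<in> ?U" "z' \<in> ?V" "?g z < ?g z'"
    using flag_ratio_increase[OF cones(1) \<open>z \<in> ?U\<close> \<open>z \<in> ?V\<close> _ _ \<open>z$p \<noteq> 0\<close> no_max] by blast
  moreover from this have "?g z' \<le> ?g y0" using max cones(3) by blast
  ultimately show False using \<open>c \<ge> 0\<close> by simp
qed

lemma attracting_set_cone_disjoint_flag:
  fixes T :: "complex^'n::finite^'n"
  assumes r: "ranking r" and tri: "triangular_wrt r T" and nz: "\<And>i. T$i$i \<noteq> 0"
    and md: "\<And>i j. cmod (T$i$i) = cmod (T$j$j)" and W: "attracting_set T W"
    and "r p0 = 0" and "pline (axis p0 1) \<notin> W"
  shows "cone_over W \<inter> flag r k = {}"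
proof (induction k)
  case 0
  show ?case by (simp add: flag_0 cone_over_def)
next
  case (Suc k)
  consider "k = 0" | "0 < k" "k < CARD('n)" | "CARD('n) \<le> k" by linarith
  then show ?case
  proof cases
    case 1
    have False if "y \<in> cone_over W" "y \<in> flag r 1" for y
    proof -
      have "y = y$p0 *s axis p0 1" using flag_1[OF ranking_inj[OF r] \<open>r p0 = 0\<close> that(2)] .
      moreover from this have "y$p0 \<noteq> 0" using that(1) unfolding cone_over_def by auto
      ultimately show False
        using that(1) \<open>pline (axis p0 1) \<notin> W\<close> cone_over_smult[of "y$p0" "axis p0 1" W]
        unfolding cone_over_def by auto
    qed
    then show ?thesis using 1 by auto
  next
    case 2
    obtain p q where "r p = k" "r q = k - 1"
      using ranking_surj[OF r] 2 by (metis less_imp_diff_less)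
    then have pq: "r p = Suc (r q)" using 2 by simp
    \<comment> \<open>the closure cannot meet \<open>flag r k\<close>, since \<open>T\<close> maps it into the cone over \<open>W\<close>\<close>
    have "cone_over (proj_top closure_of W) \<inter> flag r (r p) = {}"
      using Suc.IH attracting_set_cones(4)[OF W] triangular_wrt_flag[OF tri] \<open>r p = k\<close> by blast
    then show ?thesis
      using attracting_set_flag_step[OF ranking_inj[OF r] tri pq md nz W] \<open>r p = k\<close> by simp
  next
    case 3
    have "flag r k = (UNIV :: (complex^'n) set)" using 3 flag_mono flag_CARD[OF r] by blast
    then show ?thesis using Suc.IH by auto
  qed
qed

lemma attracting_set_contains_first_axis:
  fixes T :: "complex^'n::finite^'n"
  assumes r: "ranking r" and tri: "triangular_wrt r T" and nz: "\<And>i. T$i$i \<noteq> 0"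
    and md: "\<And>i j. cmod (T$i$i) = cmod (T$j$j)" and W: "attracting_set T W" and "r p0 = 0"
  shows "pline (axis p0 1) \<in> W"
proof (rule ccontr)
  assume "pline (axis p0 1) \<notin> W"
  then have "cone_over W = {}"
    using attracting_set_cone_disjoint_flag[OF assms, of "CARD('n)"] by (simp add: flag_CARD[OF r])
  moreover obtain x where "x \<in> W" using W unfolding attracting_set_def by blast
  then obtain v where "v \<noteq> 0" "x = pline v"
    using W proj_space_cases unfolding attracting_set_def topspace_proj_top by blast
  ultimately show False using \<open>x \<in> W\<close> unfolding cone_over_def by blast
qed

lemma no_attracting_set_if_moduli_equal:
  fixes T :: "complex^'n::finite^'n"
  assumes r: "ranking r" and tri: "triangular_wrt r T" and "invertible T"
    and md: "\<And>i j. cmod (T$i$i) = cmod (T$j$j)"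
  shows "\<not> attracting_set T W"
proof
  assume W: "attracting_set T W"
  obtain T' where inv: "T ** T' = mat 1" "T' ** T = mat 1"
    using \<open>invertible T\<close> unfolding invertible_def by blast
  obtain p0 where "r p0 = 0" using ranking_surj[OF r, of 0] by auto
  note tri' = triangular_wrt_inverse[OF r tri inv]
  have nz: "T$i$i \<noteq> 0" "T'$i$i \<noteq> 0" for i using tri'(2)[of i] by auto
  have "cmod (T'$i$i) * cmod (T$i$i) = 1" for i
    using arg_cong[OF tri'(2)[of i], of cmod] by (simp add: norm_mult)
  then have "cmod (T'$i$i) = 1 / cmod (T$i$i)" for i
    using nz by (simp add: nonzero_eq_divide_eq)
  then have md': "cmod (T'$i$i) = cmod (T'$j$j)" for i j using md by simp
  \<comment> \<open>by duality, the inverse has an attracting set disjoint from \<open>W\<close>\<close>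
  have "attracting_set T' (topspace proj_top - proj_top closure_of W)"
    using attracting_set_inverse[OF inv W] .
  then have "pline (axis p0 1) \<in> topspace proj_top - proj_top closure_of W"
    using attracting_set_contains_first_axis[OF r tri'(1) nz(2) md' _ \<open>r p0 = 0\<close>] by blast
  moreover have "pline (axis p0 1) \<in> W"
    using attracting_set_contains_first_axis[OF r tri nz(1) md W \<open>r p0 = 0\<close>] .
  ultimately show False
    using closure_of_subset[of W proj_top] W unfolding attracting_set_def by blast
qed

lemma ex_attracting_set_triangular_iff:
  fixes T :: "complex^'n::finite^'n"
  assumes r: "ranking r" and tri: "triangular_wrt r T" and "invertible T"
    and sorted: "\<And>i j. r i \<le> r j \<Longrightarrow> cmod (T$j$j) \<le> cmod (T$i$i)"
  shows "(\<exists>W. attracting_set T W) \<longleftrightarrow> (\<exists>i j. cmod (T$i$i) \<noteq> cmod (T$j$j))"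
  using attracting_set_if_moduli_differ[OF ranking_inj[OF r] tri sorted]
    no_attracting_set_if_moduli_equal[OF r tri \<open>invertible T\<close>] by blast

theorem mainTheorem4:
  fixes A :: "complex^'n^'n"
  assumes "CARD('n) \<ge> 2" and "invertible A"
  shows "loxodromic A \<longleftrightarrow>
    (\<exists>W. openin proj_top W \<and> W \<noteq> {} \<and> W \<subset> topspace proj_top \<and>
         proj_map A ` (proj_top closure_of W) \<subseteq> W)"
proof -
  obtain r :: "'n \<Rightarrow> nat" and Q Q' T :: "complex^'n^'n"
    where r: "ranking r" and Q: "Q ** Q' = mat 1" "Q' ** Q = mat 1"
    and A: "A = Q' ** T ** Q" and tri: "triangular_wrt r T"
    and sorted: "\<And>i j. r i \<le> r j \<Longrightarrow> cmod (T$j$j) \<le> cmod (T$i$i)"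
    by (rule schur_triangularization_sorted[of A]) blast
  have "invertible T"
    using \<open>invertible A\<close> unfolding A invertible_det_nz det_conj[OF Q(2)] .
  have "loxodromic A \<longleftrightarrow> (\<exists>i j. cmod (T$i$i) \<noteq> cmod (T$j$j))"
    unfolding A loxodromic_conj[OF Q]
    by (rule loxodromic_triangular_iff[OF ranking_inj[OF r] tri \<open>invertible T\<close>])
  moreover have "(\<exists>W. attracting_set A W) \<longleftrightarrow> (\<exists>i j. cmod (T$i$i) \<noteq> cmod (T$j$j))"
    unfolding A ex_attracting_set_conj[OF Q]
    by (rule ex_attracting_set_triangular_iff[OF r tri \<open>invertible T\<close> sorted])
  ultimately show ?thesis unfolding attracting_set_def by simp
qed

end
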